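(* Let $S=K[x_1,\dots,x_n]$ be a standard graded polynomial ring over a field $K$ and let $q_1,\dots,q_m\in S$ be homogeneous quadrics forming a regular sequence. Then $R=S/(q_1,\dots,q_m)$ is LG-quadratic; explicitly, with $A=R[y_1,\dots,y_m]/(y_1^2+q_1,\dots,y_m^2+q_m)$ (new variables $y_i$ of degree $1$), $A$ is G-quadratic, $y_1,\dots,y_m$ is a regular sequence on $A$, and $R\cong A/(y_1,\dots,y_m)$.
   Context: A standard graded $K$-algebra $R$ (a quotient $S/I$ of a standard graded polynomial ring $S$ by a homogeneous ideal $I$ containing no linear forms) is G-quadratic if $I$ has a Gröbner basis consisting of quadrics with respect to some choice of linear coordinates of $S_1$ and some term order on $S$. $R$ is LG-quadratic if there exist a G-quadratic algebra $A$ and a regular sequence $y_1,\dots,y_c$ of linear forms of $A$ with $R\cong A/(y_1,\dots,y_c)$. *)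

theory Defs
  imports "HOL-Library.Poly_Mapping"
begin

text \<open>The polynomial ring S_n = K[x_0,...,x_{n-1}] is the set of polynomials
  only involving the variables x_i with i < n.\<close>

type_synonym monom = "nat \<Rightarrow>\<^sub>0 nat"
type_synonym 'k mpoly = "monom \<Rightarrow>\<^sub>0 'k"

definition Var :: "nat \<Rightarrow> 'k::field mpoly" where
  "Var i = Poly_Mapping.single (Poly_Mapping.single i 1) 1"

definition mdeg :: "monom \<Rightarrow> nat" where
  "mdeg m = (\<Sum>i\<in>Poly_Mapping.keys m. Poly_Mapping.lookup m i)"

definition polyring :: "nat \<Rightarrow> 'k::field mpoly set" where
  "polyring n = {p. \<forall>m\<in>Poly_Mapping.keys p. Poly_Mapping.keys m \<subseteq> {..<n}}"

definition homogeneous :: "nat \<Rightarrow> 'k::field mpoly \<Rightarrow> bool" where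
  "homogeneous d p \<longleftrightarrow> (\<forall>m\<in>Poly_Mapping.keys p. mdeg m = d)"

definition hpart :: "nat \<Rightarrow> 'k::field mpoly \<Rightarrow> 'k mpoly" where
  "hpart d p = (\<Sum>m\<in>{m\<in>Poly_Mapping.keys p. mdeg m = d}. Poly_Mapping.single m (Poly_Mapping.lookup p m))"

text \<open>linear forms / quadrics of S_n (homogeneous of degree 1 / 2; 0 is allowed)\<close>
definition linear_form :: "nat \<Rightarrow> 'k::field mpoly \<Rightarrow> bool" where
  "linear_form n p \<longleftrightarrow> p \<in> polyring n \<and> homogeneous 1 p"

definition quadric :: "nat \<Rightarrow> 'k::field mpoly \<Rightarrow> bool" where
  "quadric n p \<longleftrightarrow> p \<in> polyring n \<and> homogeneous 2 p"

definition ideal_gen :: "nat \<Rightarrow> 'k::field mpoly set \<Rightarrow> 'k mpoly set" where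
  "ideal_gen n G = {p. \<exists>F c. finite F \<and> F \<subseteq> G \<and> (\<forall>g\<in>F. c g \<in> polyring n)
                          \<and> p = (\<Sum>g\<in>F. c g * g)}"

definition is_ideal :: "nat \<Rightarrow> 'k::field mpoly set \<Rightarrow> bool" where
  "is_ideal n I \<longleftrightarrow> I \<subseteq> polyring n \<and> 0 \<in> I \<and> (\<forall>p\<in>I. \<forall>q\<in>I. p + q \<in> I)
                    \<and> (\<forall>p\<in>I. \<forall>r\<in>polyring n. r * p \<in> I)"

definition homogeneous_ideal :: "nat \<Rightarrow> 'k::field mpoly set \<Rightarrow> bool" where
  "homogeneous_ideal n I \<longleftrightarrow> is_ideal n I \<and> (\<forall>p\<in>I. \<forall>d. hpart d p \<in> I)"

text \<open>S_n/I is a standard graded K-algebra presentation: I homogeneous,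
  containing no (nonzero) linear forms\<close>
definition std_graded :: "nat \<Rightarrow> 'k::field mpoly set \<Rightarrow> bool" where
  "std_graded n I \<longleftrightarrow> homogeneous_ideal n I \<and> (\<forall>p\<in>I. linear_form n p \<longrightarrow> p = 0)"

definition subst :: "(nat \<Rightarrow> 'k::field mpoly) \<Rightarrow> 'k mpoly \<Rightarrow> 'k mpoly" where
  "subst \<sigma> p = (\<Sum>m\<in>Poly_Mapping.keys p. Poly_Mapping.single 0 (Poly_Mapping.lookup p m) *
                    (\<Prod>i\<in>Poly_Mapping.keys m. \<sigma> i ^ Poly_Mapping.lookup m i))"

definition coord_change :: "nat \<Rightarrow> (nat \<Rightarrow> 'k::field mpoly) \<Rightarrow> bool" where
  "coord_change n \<sigma> \<longleftrightarrow> (\<forall>i<n. linear_form n (\<sigma> i)) \<and>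
     (\<exists>\<tau>. (\<forall>i<n. linear_form n (\<tau> i)) \<and> (\<forall>i<n. subst \<tau> (\<sigma> i) = Var i)
          \<and> (\<forall>i<n. subst \<sigma> (\<tau> i) = Var i))"

definition term_order :: "nat \<Rightarrow> (monom \<Rightarrow> monom \<Rightarrow> bool) \<Rightarrow> bool" where
  "term_order n ord \<longleftrightarrow>
     (let M = {m. Poly_Mapping.keys m \<subseteq> {..<n}} in
       (\<forall>a\<in>M. ord a a) \<and>
       (\<forall>a\<in>M. \<forall>b\<in>M. ord a b \<and> ord b a \<longrightarrow> a = b) \<and>
       (\<forall>a\<in>M. \<forall>b\<in>M. \<forall>c\<in>M. ord a b \<and> ord b c \<longrightarrow> ord a c) \<and>
       (\<forall>a\<in>M. \<forall>b\<in>M. ord a b \<or> ord b a) \<and>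
       (\<forall>a\<in>M. ord 0 a) \<and>
       (\<forall>a\<in>M. \<forall>b\<in>M. \<forall>c\<in>M. ord a b \<longrightarrow> ord (a + c) (b + c)))"

definition lead_monom :: "(monom \<Rightarrow> monom \<Rightarrow> bool) \<Rightarrow> 'k::field mpoly \<Rightarrow> monom" where
  "lead_monom ord p = (THE m. m \<in> Poly_Mapping.keys p \<and> (\<forall>m'\<in>Poly_Mapping.keys p. ord m' m))"

definition groebner_basis :: "(monom \<Rightarrow> monom \<Rightarrow> bool) \<Rightarrow> 'k::field mpoly set \<Rightarrow> 'k mpoly set \<Rightarrow> bool" where
  "groebner_basis ord G I \<longleftrightarrow> finite G \<and> G \<subseteq> I \<and>
     (\<forall>f\<in>I. f \<noteq> 0 \<longrightarrow> (\<exists>g\<in>G. g \<noteq> 0 \<and> (\<exists>u. lead_monom ord f = lead_monom ord g + u)))"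

definition G_quadratic :: "nat \<Rightarrow> 'k::field mpoly set \<Rightarrow> bool" where
  "G_quadratic n I \<longleftrightarrow> std_graded n I \<and>
     (\<exists>\<sigma> ord G. coord_change n \<sigma> \<and> term_order n ord \<and> (\<forall>g\<in>G. quadric n g) \<and>
        groebner_basis ord G (subst \<sigma> ` I))"

definition regular_seq :: "nat \<Rightarrow> 'k::field mpoly set \<Rightarrow> 'k mpoly list \<Rightarrow> bool" where
  "regular_seq n J ys \<longleftrightarrow> set ys \<subseteq> polyring n \<and>
     1 \<notin> ideal_gen n (J \<union> set ys) \<and>
     (\<forall>i<length ys. \<forall>f\<in>polyring n.
        ys ! i * f \<in> ideal_gen n (J \<union> set (take i ys)) \<longrightarrow> f \<in> ideal_gen n (J \<union> set (take i ys)))"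

text \<open>Isomorphism of standard graded K-algebras S_n/I and S_N/J, given by
  graded K-algebra maps induced by linear substitutions, mutually inverse.\<close>
definition graded_iso :: "nat \<Rightarrow> 'k::field mpoly set \<Rightarrow> nat \<Rightarrow> 'k mpoly set \<Rightarrow> bool" where
  "graded_iso n I N J \<longleftrightarrow>
     (\<exists>\<phi> \<psi>. (\<forall>i<n. linear_form N (\<phi> i)) \<and> (\<forall>i<N. linear_form n (\<psi> i)) \<and>
        subst \<phi> ` I \<subseteq> J \<and> subst \<psi> ` J \<subseteq> I \<and>
        (\<forall>i<n. subst \<psi> (\<phi> i) - Var i \<in> I) \<and>
        (\<forall>i<N. subst \<phi> (\<psi> i) - Var i \<in> J))"

definition LG_quadratic :: "nat \<Rightarrow> 'k::field mpoly set \<Rightarrow> bool" where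
  "LG_quadratic n I \<longleftrightarrow> std_graded n I \<and>
     (\<exists>N J ys. G_quadratic N J \<and> (\<forall>y\<in>set ys. linear_form N y) \<and>
        regular_seq N J ys \<and> graded_iso n I N (ideal_gen N (J \<union> set ys)))"

end

theory Submission
  imports Defs
begin

text \<open>
  Let q_0, ..., q_{m-1} be quadrics forming a regular sequence in S = K[x_0, ..., x_{n-1}],
  adjoin new variables y_j = x_{n+j} and put J = (y_j^2 + q_j : j < m) and, for i \<le> m,
  L_i = J + (y_0, ..., y_{i-1}) in S' = K[x_0, ..., x_{n+m-1}], Q_i = (q_0, ..., q_{i-1}) in S.

  Everything rests on an explicit normal form Nf_i on S': it is the K-linear map that sends
  a monomial containing some y_k with k < i to 0 and otherwise replaces every y_j^2 by -q_j.
  Writing a polynomial as a sum of y-monomials with coefficients in S ("y-coefficients") we show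
    (1) f - Nf_i f \<in> L_i,
    (2) every y-coefficient of Nf_i P lies in Q_i whenever P \<in> L_i,
    (3) a polynomial all of whose y-coefficients lie in Q_i belongs to L_i.
  For i = 0, (2) says that Nf_0 annihilates J; hence the leading monomial of every nonzero
  element of J, for an order comparing total y-degree first, is divisible by some y_j^2, so the
  generators y_j^2 + q_j form a quadratic Groebner basis.  For i = m, (1)-(3) show that setting
  all y_j to 0 induces S/(q) \<cong> S'/L_m.  Finally, if y_i f \<in> L_i, comparing the y-coefficients of
  Nf_i f and Nf_i (y_i f) via (2) and the regularity of q_i modulo Q_i puts all y-coefficients of
  Nf_i f into Q_i, so f \<in> L_i by (1) and (3): y_0, ..., y_{m-1} is a regular sequence modulo J.
\<close>

abbreviation lookup :: "('a \<Rightarrow>\<^sub>0 'b::zero) \<Rightarrow> 'a \<Rightarrow> 'b" where "lookup \<equiv> Poly_Mapping.lookup"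

abbreviation keys :: "('a \<Rightarrow>\<^sub>0 'b::zero) \<Rightarrow> 'a set" where "keys \<equiv> Poly_Mapping.keys"

abbreviation single :: "'a \<Rightarrow> 'b \<Rightarrow> ('a \<Rightarrow>\<^sub>0 'b::zero)" where "single \<equiv> Poly_Mapping.single"

lemma lookup_single_mult: "lookup (single 0 c * (p::'k::field mpoly)) a = c * lookup p a"
proof -
  have "single 0 c * p = Poly_Mapping.map ((*) c) p" by (simp add: mult_map_scale_conv_mult)
  then show ?thesis by (simp add: Poly_Mapping.map.rep_eq when_def)
qed

lemma poly_sum_terms: "(p::'k::field mpoly) = (\<Sum>a\<in>keys p. single a (lookup p a))"
proof (rule poly_mapping_eqI)
  fix k
  show "lookup p k = lookup (\<Sum>a\<in>keys p. single a (lookup p a)) k"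
    by (cases "k \<in> keys p") (auto simp: lookup_sum lookup_single when_def in_keys_iff)
qed

lemma monom_sum_singles: "(a::monom) = (\<Sum>i\<in>keys a. single i (lookup a i))"
proof (rule poly_mapping_eqI)
  fix k
  show "lookup a k = lookup (\<Sum>i\<in>keys a. single i (lookup a i)) k"
    by (cases "k \<in> keys a") (auto simp: lookup_sum lookup_single when_def in_keys_iff)
qed

lemma single0_mult: "single 0 (c*d) = single 0 c * (single 0 d :: 'k::field mpoly)"
  by (simp add: mult_single)

lemma single0_mult_single: "single 0 c * single a 1 = (single a c :: 'k::field mpoly)"
  by (simp add: mult_single)

lemma keys_single_mult: "keys (single 0 c * (x::'k::field mpoly)) \<subseteq> keys x"
  by (auto simp: in_keys_iff lookup_single_mult)

lemma mult_single_sum: "(p::'k::field mpoly) * single c 1 = (\<Sum>a\<in>keys p. single (a + c) (lookup p a))"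
proof -
  have "p * single c 1 = (\<Sum>a\<in>keys p. single a (lookup p a)) * single c 1" by (subst poly_sum_terms, rule refl)
  also have "\<dots> = (\<Sum>a\<in>keys p. single (a + c) (lookup p a))" by (simp add: sum_distrib_right mult_single)
  finally show ?thesis .
qed

lemma monom_split:
  fixes a :: monom
  assumes "c \<le> lookup a k"
  shows "a = (a - single k c) + single k c" and "keys (a - single k c) \<subseteq> keys a"
proof -
  show "a = (a - single k c) + single k c"
    by (rule poly_mapping_eqI)
      (use assms in \<open>auto simp: lookup_add minus_poly_mapping.rep_eq lookup_single when_def
        intro!: le_add_diff_inverse2[symmetric]\<close>)
  show "keys (a - single k c) \<subseteq> keys a"
    by (auto simp: in_keys_iff minus_poly_mapping.rep_eq)
qed

lemma add_single_eq_iff: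
  fixes x \<beta> :: monom
  assumes "1 \<le> lookup \<beta> k"
  shows "(x + single k 1 = \<beta>) \<longleftrightarrow> (x = \<beta> - single k 1)"
proof
  assume "x + single k 1 = \<beta>" then show "x = \<beta> - single k 1" by (metis add_diff_cancel_right')
next
  assume "x = \<beta> - single k 1" then show "x + single k 1 = \<beta>" using monom_split(1)[OF assms] by simp
qed

lemma zero_le_monom: "(0::monom) \<le> a"
proof (cases "a = 0")
  case True then show ?thesis by simp
next
  case False
  have "\<exists>k. lookup a k \<noteq> 0"
  proof (rule ccontr)
    assume "\<not> (\<exists>k. lookup a k \<noteq> 0)"
    then have "a = 0" by (intro poly_mapping_eqI) simp
    with False show False by simp
  qed
  then obtain k where k: "lookup a k \<noteq> 0" by blast
  define k0 where "k0 = (LEAST k. lookup a k \<noteq> 0)"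
  have "lookup a k0 \<noteq> 0" using LeastI[of "\<lambda>k. lookup a k \<noteq> 0" k] k by (simp add: k0_def)
  moreover have "\<forall>k'<k0. lookup a k' = 0" using not_less_Least k0_def by blast
  ultimately have "less_fun (lookup 0) (lookup a)" unfolding less_fun_def by (intro exI[of _ k0]) auto
  then show ?thesis by (simp add: less_eq_poly_mapping.rep_eq)
qed

lemma mdeg_superset: "finite K \<Longrightarrow> keys a \<subseteq> K \<Longrightarrow> mdeg a = (\<Sum>i\<in>K. lookup a i)"
  unfolding mdeg_def by (rule sum.mono_neutral_left) (auto simp: in_keys_iff)

lemma mdeg_add: "mdeg (a+b) = mdeg a + mdeg b"
proof -
  let ?K = "keys a \<union> keys b"
  have "keys (a+b) \<subseteq> ?K" by (rule keys_add)
  then have "mdeg (a+b) = (\<Sum>i\<in>?K. lookup (a+b) i)" by (simp add: mdeg_superset)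
  also have "\<dots> = (\<Sum>i\<in>?K. lookup a i) + (\<Sum>i\<in>?K. lookup b i)" by (simp add: lookup_add sum.distrib)
  also have "\<dots> = mdeg a + mdeg b" using mdeg_superset[of ?K a] mdeg_superset[of ?K b] by simp
  finally show ?thesis .
qed

lemma mdeg_single[simp]: "mdeg (single i k) = k"
  by (cases "k = 0") (auto simp: mdeg_def)

lemma mdeg_zero[simp]: "mdeg 0 = 0"
  by (simp add: mdeg_def)

section \<open>K-linear extension of maps on monomials\<close>

text \<open>Every map h from monomials to polynomials extends K-linearly to polynomials.  Substitution,
  homogeneous components, the normal forms and the y-coefficients below are all of this form,
  so their additivity and behaviour under multiplication by monomials are proved once here.\<close>

definition lin_ext :: "(monom \<Rightarrow> 'k::field mpoly) \<Rightarrow> 'k mpoly \<Rightarrow> 'k mpoly" where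
  "lin_ext h p = (\<Sum>a\<in>keys p. single 0 (lookup p a) * h a)"

lemma lin_ext_superset:
  "finite K \<Longrightarrow> keys p \<subseteq> K \<Longrightarrow> lin_ext h p = (\<Sum>a\<in>K. single 0 (lookup p a) * h a)"
  unfolding lin_ext_def by (rule sum.mono_neutral_left) (auto simp: in_keys_iff)

lemma lin_ext_add: "lin_ext h (p + q) = lin_ext h p + lin_ext h q"
proof -
  let ?K = "keys p \<union> keys q"
  have "keys (p+q) \<subseteq> ?K" by (rule keys_add)
  then have "lin_ext h (p+q) = (\<Sum>a\<in>?K. single 0 (lookup (p+q) a) * h a)" by (simp add: lin_ext_superset)
  also have "\<dots> = (\<Sum>a\<in>?K. single 0 (lookup p a) * h a) + (\<Sum>a\<in>?K. single 0 (lookup q a) * h a)"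
    by (simp add: lookup_add single_add distrib_right sum.distrib)
  also have "\<dots> = lin_ext h p + lin_ext h q" using lin_ext_superset[of ?K p h] lin_ext_superset[of ?K q h] by simp
  finally show ?thesis .
qed

lemma lin_ext_zero[simp]: "lin_ext h 0 = 0" by (simp add: lin_ext_def)

lemma lin_ext_sum: "lin_ext h (\<Sum>i\<in>I. f i) = (\<Sum>i\<in>I. lin_ext h (f i))"
  by (induction I rule: infinite_finite_induct) (auto simp: lin_ext_add)

lemma lin_ext_single: "lin_ext h (single a c) = single 0 c * h a"
  by (cases "c = 0") (auto simp: lin_ext_def)

lemma lin_ext_scalar: "lin_ext h (single 0 c * p) = single 0 c * lin_ext h p"
proof -
  have "lin_ext h (single 0 c * p) = (\<Sum>a\<in>keys p. single 0 (lookup (single 0 c * p) a) * h a)"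
    by (rule lin_ext_superset) (auto simp: lookup_single_mult in_keys_iff)
  also have "\<dots> = single 0 c * lin_ext h p"
    unfolding lin_ext_def by (simp add: lookup_single_mult sum_distrib_left mult.assoc single0_mult)
  finally show ?thesis .
qed

lemma lin_ext_cong: "(\<And>a. a \<in> keys p \<Longrightarrow> h a = h' a) \<Longrightarrow> lin_ext h p = lin_ext h' p"
  unfolding lin_ext_def by (rule sum.cong) auto

lemma lin_ext_id: "lin_ext (\<lambda>a. single a 1) p = p"
  unfolding lin_ext_def by (simp add: single0_mult_single flip: poly_sum_terms)

lemma lin_ext_mult_right: "lin_ext h p * c = lin_ext (\<lambda>a. h a * c) p"
  unfolding lin_ext_def by (simp add: sum_distrib_right mult.assoc)

lemma lin_ext_mult_left: "lin_ext (\<lambda>a. c * h a) p = c * lin_ext h p"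
  using lin_ext_mult_right[of h p c] by (simp add: mult.commute)

lemma lin_ext_diff_fun: "lin_ext (\<lambda>a. h a - h' a) p = lin_ext h p - lin_ext h' p"
  unfolding lin_ext_def by (simp add: right_diff_distrib sum_subtractf)

lemma lin_ext_sum_fun: "lin_ext (\<lambda>a. \<Sum>b\<in>B. h b a) p = (\<Sum>b\<in>B. lin_ext (h b) p)"
  unfolding lin_ext_def by (simp add: sum_distrib_left sum.swap[of _ B])

lemma lin_ext_zero_fun[simp]: "lin_ext (\<lambda>a. 0) p = 0"
  unfolding lin_ext_def by simp

lemma lin_ext_comp: "lin_ext g (lin_ext h p) = lin_ext (\<lambda>a. lin_ext g (h a)) p"
  unfolding lin_ext_def[of h] by (simp add: lin_ext_sum lin_ext_scalar lin_ext_def[of "\<lambda>a. lin_ext g (h a)"])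

lemma lin_ext_mult_monom: "lin_ext h (p * single c 1) = lin_ext (\<lambda>a. h (a + c)) p"
  unfolding mult_single_sum lin_ext_sum lin_ext_single lin_ext_def[of "\<lambda>a. h (a + c)"] by simp

lemma lin_ext_mult:
  fixes p s :: "'k::field mpoly"
  shows "lin_ext h (p * s) = (\<Sum>b\<in>keys s. single 0 (lookup s b) * lin_ext (\<lambda>a. h (a + b)) p)"
proof -
  have e: "p * single b c = single 0 c * (p * single b 1)" for b c
  proof -
    have "single b c = single 0 c * single b (1::'k)" by (simp add: mult_single)
    then show ?thesis by (simp add: ac_simps)
  qed
  have "p * s = p * (\<Sum>b\<in>keys s. single b (lookup s b))" by (subst (1) poly_sum_terms[of s], rule refl)
  also have "\<dots> = (\<Sum>b\<in>keys s. single 0 (lookup s b) * (p * single b 1))"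
    unfolding sum_distrib_left by (rule sum.cong[OF refl], rule e)
  finally show ?thesis
    by (simp add: lin_ext_sum lin_ext_scalar lin_ext_mult_monom)
qed

lemma keys_lin_ext: "keys (lin_ext h p) \<subseteq> (\<Union>a\<in>keys p. keys (h a))"
proof -
  have "keys (lin_ext h p) \<subseteq> (\<Union>a\<in>keys p. keys (single 0 (lookup p a) * h a))"
    unfolding lin_ext_def by (rule keys_sum)
  also have "\<dots> \<subseteq> (\<Union>a\<in>keys p. keys (h a))" using keys_single_mult by blast
  finally show ?thesis .
qed

lemma lookup_lin_ext: "lookup (lin_ext h p) M = (\<Sum>a\<in>keys p. lookup p a * lookup (h a) M)"
  unfolding lin_ext_def by (simp add: lookup_sum lookup_single_mult)

lemma subst_as_lin_ext: "subst \<sigma> p = lin_ext (\<lambda>a. \<Prod>i\<in>keys a. \<sigma> i ^ lookup a i) p"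
  by (simp add: subst_def lin_ext_def)

lemma polyring_iff: "p \<in> polyring N \<longleftrightarrow> (\<forall>a\<in>keys p. keys a \<subseteq> {..<N})"
  by (simp add: polyring_def)

lemma polyring_zero[simp]: "0 \<in> polyring N" by (simp add: polyring_iff)

lemma polyring_single: "keys a \<subseteq> {..<N} \<Longrightarrow> single a c \<in> polyring N"
  by (simp add: polyring_iff)

lemma polyring_one[simp]: "1 \<in> polyring N"
  unfolding single_one[symmetric] by (rule polyring_single) simp

lemma polyring_add: "p \<in> polyring N \<Longrightarrow> q \<in> polyring N \<Longrightarrow> p + q \<in> polyring N"
  unfolding polyring_iff by (auto dest!: subsetD[OF keys_add])

lemma polyring_mult: "p \<in> polyring N \<Longrightarrow> q \<in> polyring N \<Longrightarrow> p * q \<in> polyring N"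
  unfolding polyring_iff
proof
  fix c assume p: "\<forall>a\<in>keys p. keys a \<subseteq> {..<N}" and q: "\<forall>a\<in>keys q. keys a \<subseteq> {..<N}"
    and c: "c \<in> keys (p * q)"
  then obtain a b where "c = a + b" "a \<in> keys p" "b \<in> keys q" using keys_mult by blast
  then show "keys c \<subseteq> {..<N}" using p q subsetD[OF keys_add[of a b]] by fastforce
qed

lemma polyring_uminus: "p \<in> polyring N \<Longrightarrow> - p \<in> polyring N"
  by (simp add: polyring_iff)

lemma polyring_pow: "p \<in> polyring N \<Longrightarrow> p ^ k \<in> polyring N"
  by (induction k) (auto simp: polyring_mult)

lemma polyring_prod: "(\<And>i. i \<in> I \<Longrightarrow> f i \<in> polyring N) \<Longrightarrow> (\<Prod>i\<in>I. f i) \<in> polyring N"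
  by (induction I rule: infinite_finite_induct) (auto simp: polyring_mult)

lemma polyring_mono: "p \<in> polyring N \<Longrightarrow> N \<le> N' \<Longrightarrow> p \<in> polyring N'"
  unfolding polyring_iff by fastforce

lemma polyring_lin_ext: "(\<And>a. a \<in> keys p \<Longrightarrow> h a \<in> polyring N) \<Longrightarrow> lin_ext h p \<in> polyring N"
  unfolding polyring_iff using subsetD[OF keys_lin_ext] by fastforce

lemma Var_pow: "Var i ^ k = (single (single i k) 1 :: 'k::field mpoly)"
proof (induction k)
  case 0 then show ?case by simp
next
  case (Suc k)
  have "Var i ^ Suc k = Var i * (single (single i k) 1 :: 'k mpoly)" using Suc by simp
  also have "\<dots> = single (single i 1 + single i k) 1" unfolding Var_def mult_single by simp
  also have "single i 1 + single i k = single i (Suc k)" by (simp only: single_add[symmetric] plus_1_eq_Suc)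
  finally show ?case .
qed

lemma Var_polyring: "i < N \<Longrightarrow> Var i \<in> polyring N"
  by (simp add: Var_def polyring_single)

lemma prod_single: "(\<Prod>i\<in>I. single (f i) 1) = (single (\<Sum>i\<in>I. f i) 1 :: 'k::field mpoly)"
  by (induction I rule: infinite_finite_induct) (simp_all add: mult_single)

lemma Var_prod: "(\<Prod>i\<in>keys a. Var i ^ lookup a i) = (single a 1 :: 'k::field mpoly)"
  by (simp add: Var_pow prod_single flip: monom_sum_singles)

lemma subst_Var: "subst Var p = p"
  unfolding subst_def Var_prod by (simp add: single0_mult_single flip: poly_sum_terms)

lemma subst_Var_i: "subst \<sigma> (Var i) = \<sigma> i"
  by (simp add: subst_def Var_def)

lemma linear_Var: "i < N \<Longrightarrow> linear_form N (Var i :: 'k::field mpoly)"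
  unfolding linear_form_def by (intro conjI Var_polyring) (simp_all add: homogeneous_def Var_def)

lemma linear_zero: "linear_form N (0 :: 'k::field mpoly)"
  by (simp add: linear_form_def homogeneous_def)

lemma set_take_map: "i \<le> m \<Longrightarrow> set (take i (map f [0..<m])) = f ` {..<i}"
  by (simp add: take_map atLeast0LessThan min_def)

definition ideal_closed :: "nat \<Rightarrow> 'k::field mpoly set \<Rightarrow> bool" where
  "ideal_closed N X \<longleftrightarrow>
     0 \<in> X \<and> (\<forall>p\<in>X. \<forall>q\<in>X. p+q \<in> X) \<and> (\<forall>p\<in>X. \<forall>r\<in>polyring N. r*p \<in> X)"

lemma ideal_gen_least:
  assumes "ideal_closed N X" "G \<subseteq> X"
  shows "ideal_gen N G \<subseteq> X"
proof
  fix p assume "p \<in> ideal_gen N G"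
  then obtain F c where F: "finite F" "F \<subseteq> G" "\<forall>g\<in>F. c g \<in> polyring N" and p: "p = (\<Sum>g\<in>F. c g * g)"
    unfolding ideal_gen_def by blast
  have "(\<Sum>g\<in>F. c g * g) \<in> X" using F
  proof (induction F rule: finite_induct)
    case empty then show ?case using assms(1) by (simp add: ideal_closed_def)
  next
    case (insert x F)
    then show ?case using assms unfolding ideal_closed_def by auto
  qed
  then show "p \<in> X" using p by simp
qed

lemma ideal_gen_intro:
  "finite F \<Longrightarrow> F \<subseteq> G \<Longrightarrow> (\<forall>g\<in>F. c g \<in> polyring N) \<Longrightarrow> p = (\<Sum>g\<in>F. c g * g) \<Longrightarrow> p \<in> ideal_gen N G"
  unfolding ideal_gen_def by auto

lemma ideal_gen_gen: "g \<in> G \<Longrightarrow> g \<in> ideal_gen N G"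
  unfolding ideal_gen_def by (rule CollectI, rule exI[of _ "{g}"], rule exI[of _ "\<lambda>_. 1"]) simp

lemma ideal_gen_zero[simp]: "0 \<in> ideal_gen N G"
  unfolding ideal_gen_def by (rule CollectI, rule exI[of _ "{}"]) simp

lemma ideal_gen_add: assumes "p \<in> ideal_gen N G" "q \<in> ideal_gen N G" shows "p + q \<in> ideal_gen N G"
proof -
  obtain F1 c1 where F1: "finite F1" "F1 \<subseteq> G" "\<forall>g\<in>F1. c1 g \<in> polyring N" and p: "p = (\<Sum>g\<in>F1. c1 g * g)"
    using assms(1) unfolding ideal_gen_def by blast
  obtain F2 c2 where F2: "finite F2" "F2 \<subseteq> G" "\<forall>g\<in>F2. c2 g \<in> polyring N" and q: "q = (\<Sum>g\<in>F2. c2 g * g)"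
    using assms(2) unfolding ideal_gen_def by blast
  define c where "c g = (if g \<in> F1 then c1 g else 0) + (if g \<in> F2 then c2 g else 0)" for g
  have 1: "(\<Sum>g\<in>F1 \<union> F2. (if g \<in> F1 then c1 g else 0) * g) = p"
    unfolding p using F1 F2 by (intro sum.mono_neutral_cong_right) auto
  have 2: "(\<Sum>g\<in>F1 \<union> F2. (if g \<in> F2 then c2 g else 0) * g) = q"
    unfolding q using F1 F2 by (intro sum.mono_neutral_cong_right) auto
  have "p + q = (\<Sum>g\<in>F1 \<union> F2. c g * g)"
    unfolding c_def distrib_right sum.distrib 1 2 by simp
  moreover have "\<forall>g\<in>F1 \<union> F2. c g \<in> polyring N"
    using F1 F2 by (auto simp: c_def intro!: polyring_add)
  ultimately show ?thesis using F1 F2 by (intro ideal_gen_intro[of "F1 \<union> F2" _ c]) auto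
qed

lemma ideal_gen_mult: assumes "p \<in> ideal_gen N G" "r \<in> polyring N" shows "r * p \<in> ideal_gen N G"
proof -
  obtain F c where F: "finite F" "F \<subseteq> G" "\<forall>g\<in>F. c g \<in> polyring N" and p: "p = (\<Sum>g\<in>F. c g * g)"
    using assms(1) unfolding ideal_gen_def by blast
  have "r * p = (\<Sum>g\<in>F. (r * c g) * g)" unfolding p by (simp add: sum_distrib_left mult.assoc)
  moreover have "\<forall>g\<in>F. r * c g \<in> polyring N" using F assms(2) by (simp add: polyring_mult)
  ultimately show ?thesis using F by (intro ideal_gen_intro[of F _ "\<lambda>g. r * c g"]) auto
qed

lemma ideal_gen_closed: "ideal_closed N (ideal_gen N G)"
  by (simp add: ideal_closed_def ideal_gen_add ideal_gen_mult)

lemma ideal_gen_uminus: "p \<in> ideal_gen N G \<Longrightarrow> - p \<in> ideal_gen N G"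
  using ideal_gen_mult[of p N G "-1"] by (simp add: polyring_uminus)

lemma ideal_gen_diff: "p \<in> ideal_gen N G \<Longrightarrow> q \<in> ideal_gen N G \<Longrightarrow> p - q \<in> ideal_gen N G"
  by (metis diff_conv_add_uminus ideal_gen_add ideal_gen_uminus)

lemma ideal_gen_sum:
  "(\<And>i. i \<in> I \<Longrightarrow> f i \<in> ideal_gen N G) \<Longrightarrow> (\<Sum>i\<in>I. f i) \<in> ideal_gen N G"
  by (induction I rule: infinite_finite_induct) (auto simp: ideal_gen_add)

lemma ideal_gen_lin_ext:
  "(\<And>a. a \<in> keys p \<Longrightarrow> h a \<in> ideal_gen N G) \<Longrightarrow> lin_ext h p \<in> ideal_gen N G"
  unfolding lin_ext_def by (intro ideal_gen_sum ideal_gen_mult) (auto intro: polyring_single)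

lemma ideal_gen_polyring: "G \<subseteq> polyring N \<Longrightarrow> ideal_gen N G \<subseteq> polyring N"
  by (rule ideal_gen_least) (auto simp: ideal_closed_def polyring_add polyring_mult)

lemma ideal_gen_mono: "G \<subseteq> H \<Longrightarrow> ideal_gen N G \<subseteq> ideal_gen N H"
  by (rule ideal_gen_least[OF ideal_gen_closed]) (auto intro: ideal_gen_gen)

lemma ideal_gen_zero_only: "ideal_gen N {0} \<subseteq> {0::'k::field mpoly}"
  by (rule ideal_gen_least) (auto simp: ideal_closed_def)

section \<open>Ideals generated by quadrics are standard graded\<close>

lemma hpart_as_lin_ext: "hpart d p = lin_ext (\<lambda>a. if mdeg a = d then single a 1 else 0) p"
proof -
  have "hpart d p = (\<Sum>a\<in>keys p. if mdeg a = d then single a (lookup p a) else 0)"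
    unfolding hpart_def by (simp add: sum.inter_filter)
  also have "\<dots> = lin_ext (\<lambda>a. if mdeg a = d then single a 1 else 0) p"
    unfolding lin_ext_def by (rule sum.cong) (auto simp: single0_mult_single)
  finally show ?thesis .
qed

lemma hpart_sum: "hpart d (\<Sum>i\<in>I. f i) = (\<Sum>i\<in>I. hpart d (f i))"
  by (simp add: hpart_as_lin_ext lin_ext_sum)

lemma hpart_polyring: "p \<in> polyring N \<Longrightarrow> hpart d p \<in> polyring N"
  unfolding hpart_as_lin_ext by (rule polyring_lin_ext) (auto simp: polyring_iff intro: polyring_single)

lemma hpart_mult_quadric:
  assumes g: "homogeneous 2 g"
  shows "hpart d (c * g) = (if 2 \<le> d then hpart (d-2) c * g else 0)"
proof -
  have key: "lin_ext (\<lambda>a. if mdeg (a + b) = d then single (a + b) 1 else 0) c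
     = (if 2 \<le> d then hpart (d-2) c * single b 1 else 0)" if b: "b \<in> keys g" for b
  proof -
    have mb: "mdeg b = 2" using g b by (simp add: homogeneous_def)
    show ?thesis
    proof (cases "2 \<le> d")
      case True
      have "lin_ext (\<lambda>a. if mdeg (a + b) = d then single (a + b) 1 else 0) c
          = lin_ext (\<lambda>a. (if mdeg a = d - 2 then single a 1 else 0) * single b 1) c"
        using True by (intro lin_ext_cong) (auto simp: mdeg_add mb mult_single)
      then show ?thesis using True by (simp add: hpart_as_lin_ext lin_ext_mult_right)
    next
      case False
      then show ?thesis by (simp add: mdeg_add mb)
    qed
  qed
  have "hpart d (c * g) = (\<Sum>b\<in>keys g. single 0 (lookup g b) * (if 2 \<le> d then hpart (d-2) c * single b 1 else 0))"
    unfolding hpart_as_lin_ext[of d] lin_ext_mult using key by (intro sum.cong) auto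
  also have "\<dots> = (if 2 \<le> d then hpart (d-2) c * g else 0)"
  proof (cases "2 \<le> d")
    case True
    have "(\<Sum>b\<in>keys g. single 0 (lookup g b) * (hpart (d-2) c * single b 1))
        = hpart (d-2) c * (\<Sum>b\<in>keys g. single b (lookup g b))"
      unfolding sum_distrib_left by (rule sum.cong[OF refl]) (subst mult.left_commute, simp only: single0_mult_single)
    then show ?thesis using True by (simp flip: poly_sum_terms)
  qed simp
  finally show ?thesis .
qed

lemma ideal_gen_min_degree:
  fixes G :: "'k::field mpoly set"
  assumes "\<forall>g\<in>G. \<forall>b\<in>keys g. k \<le> mdeg b" "p \<in> ideal_gen N G"
  shows "\<forall>a\<in>keys p. k \<le> mdeg a"
proof -
  define X where "X = {p::'k::field mpoly. \<forall>a\<in>keys p. k \<le> mdeg a}"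
  have a: "p + q \<in> X" if "p \<in> X" "q \<in> X" for p q
    unfolding X_def
  proof (intro CollectI ballI)
    fix a assume "a \<in> keys (p + q)"
    then have "a \<in> keys p \<or> a \<in> keys q" using subsetD[OF keys_add[of p q]] by simp
    then show "k \<le> mdeg a" using that unfolding X_def by blast
  qed
  have m: "r * p \<in> X" if p: "p \<in> X" for p r :: "'k mpoly"
    unfolding X_def
  proof (intro CollectI ballI)
    fix a assume "a \<in> keys (r * p)"
    then have "a \<in> {b + c |b c. b \<in> keys r \<and> c \<in> keys p}" using subsetD[OF keys_mult[of r p]] by simp
    then obtain b c where "a = b + c" "b \<in> keys r" "c \<in> keys p" by blast
    then have "k \<le> mdeg c" "mdeg a = mdeg b + mdeg c" using p unfolding X_def by (auto simp: mdeg_add)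
    then show "k \<le> mdeg a" by simp
  qed
  have z: "0 \<in> X" unfolding X_def by simp
  have "ideal_closed N X" unfolding ideal_closed_def using a m z by blast
  moreover have "G \<subseteq> X" using assms(1) unfolding X_def by blast
  ultimately have "ideal_gen N G \<subseteq> X" by (rule ideal_gen_least)
  then show ?thesis using assms(2) unfolding X_def by blast
qed

text \<open>Hence an ideal generated by quadrics is homogeneous, and contains no nonzero linear forms because
  all its monomials have degree at least 2.\<close>

lemma std_graded_quadric_ideal:
  fixes G :: "'k::field mpoly set"
  assumes G: "\<forall>g\<in>G. quadric N g"
  shows "std_graded N (ideal_gen N G)"
proof -
  let ?I = "ideal_gen N G"
  have Gp: "G \<subseteq> polyring N" using G by (auto simp: quadric_def)
  have isI: "is_ideal N ?I"
    unfolding is_ideal_def using ideal_gen_polyring[OF Gp] by (auto intro: ideal_gen_add ideal_gen_mult)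
  have hom: "hpart d p \<in> ?I" if p: "p \<in> ?I" for p d
  proof -
    obtain F c where F: "finite F" "F \<subseteq> G" "\<forall>g\<in>F. c g \<in> polyring N" and pe: "p = (\<Sum>g\<in>F. c g * g)"
      using p unfolding ideal_gen_def by blast
    have hg: "homogeneous 2 g" if "g \<in> F" for g using G F that by (auto simp: quadric_def)
    have "hpart d p = (\<Sum>g\<in>F. if 2 \<le> d then hpart (d-2) (c g) * g else 0)"
      unfolding pe hpart_sum by (rule sum.cong) (auto simp: hpart_mult_quadric hg)
    then show ?thesis
    proof (cases "2 \<le> d")
      case True
      then have "hpart d p = (\<Sum>g\<in>F. hpart (d-2) (c g) * g)" using \<open>hpart d p = _\<close> by simp
      then show ?thesis using F by (intro ideal_gen_intro[of F _ "\<lambda>g. hpart (d-2) (c g)"]) (auto intro: hpart_polyring)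
    qed (simp add: \<open>hpart d p = _\<close>)
  qed
  have deg: "\<forall>g\<in>G. \<forall>b\<in>keys g. 2 \<le> mdeg b" using G by (auto simp: quadric_def homogeneous_def)
  have no_linear: "p = 0" if "p \<in> ?I" "linear_form N p" for p
  proof -
    have "\<forall>a\<in>keys p. 2 \<le> mdeg a" using ideal_gen_min_degree[OF deg that(1)] .
    moreover have "\<forall>a\<in>keys p. mdeg a = 1" using that(2) by (auto simp: linear_form_def homogeneous_def)
    ultimately have "keys p = {}" by fastforce
    then show ?thesis by simp
  qed
  show ?thesis unfolding std_graded_def homogeneous_ideal_def using isI hom no_linear by blast
qed

section \<open>The setting: a sequence of quadrics and the deformation by y_j^2\<close>

text \<open>We fix quadrics q_0, ..., q_{m-1} of S_n; the variable x_{n+j} of S_{n+m} plays the role of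
  y_j.  J is the ideal of the G-quadratic algebra, L i = J + (y_0, ..., y_{i-1}),
  Q i = (q_0, ..., q_{i-1}) in S_n (with 0 added so that Q 0 is defined uniformly), and I is the
  ideal of the complete intersection.\<close>

locale quadric_seq =
  fixes n m :: nat and q :: "nat \<Rightarrow> 'k::field mpoly"
  assumes quad: "\<forall>i<m. quadric n (q i)"
begin

abbreviation J :: "'k mpoly set" where "J \<equiv> ideal_gen (n+m) ((\<lambda>i. Var (n + i) ^ 2 + q i) ` {..<m})"
abbreviation L :: "nat \<Rightarrow> 'k mpoly set" where "L i \<equiv> ideal_gen (n+m) (J \<union> (\<lambda>i. Var (n+i)) ` {..<i})"
abbreviation Q :: "nat \<Rightarrow> 'k mpoly set" where "Q i \<equiv> ideal_gen n ({0} \<union> q ` {..<i})"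
abbreviation I :: "'k mpoly set" where "I \<equiv> ideal_gen n (q ` {..<m})"

lemma q_poly: "j<m \<Longrightarrow> q j \<in> polyring n"
  using quad by (simp add: quadric_def)

lemma q_hom: "j<m \<Longrightarrow> homogeneous 2 (q j)"
  using quad by (simp add: quadric_def)

lemma q_keys: "j<m \<Longrightarrow> b \<in> keys (q j) \<Longrightarrow> keys b \<subseteq> {..<n}"
  using q_poly by (auto simp: polyring_iff)

lemma lookup_xmonom_y: "keys b \<subseteq> {..<n} \<Longrightarrow> n \<le> k \<Longrightarrow> lookup b k = 0"
  by (metis lessThan_iff not_in_keys_iff_lookup_eq_zero not_le subsetD)

lemma std_graded_I: "std_graded n I"
  by (rule std_graded_quadric_ideal) (use quad in auto)

lemma Var_y: "Var (n+j) = (single (single (n+j) 1) 1 :: 'k mpoly)" by (simp add: Var_def)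

lemma Var_y_square: "Var (n+j) ^ 2 = (single (single (n+j) 2) 1 :: 'k mpoly)" by (simp add: Var_pow)

lemma Var_y_polyring: "j < m \<Longrightarrow> Var (n+j) \<in> polyring (n+m)"
  by (simp add: Var_polyring)

lemma gen_polyring: "j < m \<Longrightarrow> Var (n+j) ^ 2 + q j \<in> polyring (n+m)"
  by (intro polyring_add polyring_pow Var_y_polyring polyring_mono[OF q_poly]) auto

lemma gen_quadric: "j < m \<Longrightarrow> quadric (n+m) (Var (n+j) ^ 2 + q j)"
proof -
  assume j: "j < m"
  have "homogeneous 2 (Var (n+j) ^ 2 + q j)" unfolding homogeneous_def
  proof
    fix b assume "b \<in> keys (Var (n+j) ^ 2 + q j)"
    then have "b \<in> keys (single (single (n+j) 2) (1::'k)) \<union> keys (q j)"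
      using keys_add[of "single (single (n+j) 2) (1::'k)" "q j"] by (auto simp: Var_y_square)
    then show "mdeg b = 2" using q_hom[OF j] by (auto simp: homogeneous_def)
  qed
  then show ?thesis using gen_polyring[OF j] by (simp add: quadric_def)
qed

lemma J_poly: "J \<subseteq> polyring (n+m)"
  by (rule ideal_gen_polyring) (auto intro: gen_polyring)

lemma L_poly: assumes "i \<le> m" shows "L i \<subseteq> polyring (n+m)"
proof (rule ideal_gen_polyring)
  have "Var (n+k) \<in> polyring (n+m)" if "k < i" for k using that assms by (intro Var_y_polyring) simp
  then show "J \<union> (\<lambda>i. Var (n+i)) ` {..<i} \<subseteq> polyring (n+m)" using J_poly by auto
qed

lemma y_in_L: "k < i \<Longrightarrow> Var (n+k) \<in> L i"
  by (rule ideal_gen_gen) auto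

lemma gen_in_J: "j < m \<Longrightarrow> Var (n+j) ^ 2 + q j \<in> J"
  by (rule ideal_gen_gen) auto

lemma gen_in_L: "j < m \<Longrightarrow> Var (n+j) ^ 2 + q j \<in> L i"
  by (rule ideal_gen_gen) (auto intro: gen_in_J)

text \<open>Since q_k = (y_k^2 + q_k) - y_k y_k, the ideal Q i is contained in L i.\<close>

lemma q_in_L: assumes "k < i" "i \<le> m" shows "q k \<in> L i"
proof -
  have e: "q k = (Var (n+k) ^ 2 + q k) - Var (n+k) * Var (n+k)" by (simp add: power2_eq_square)
  have A: "Var (n+k) ^ 2 + q k \<in> L i" using assms by (intro gen_in_L) simp
  have B: "Var (n+k) * Var (n+k) \<in> L i"
    using assms by (intro ideal_gen_mult y_in_L Var_y_polyring) simp_all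
  show ?thesis by (subst e) (rule ideal_gen_diff[OF A B])
qed

lemma Q_sub_L: assumes "i \<le> m" shows "Q i \<subseteq> L i"
proof (rule ideal_gen_least)
  have "r * p \<in> L i" if "p \<in> L i" "r \<in> polyring n" for p r
    using that by (intro ideal_gen_mult polyring_mono[of r n "n+m"]) simp_all
  then show "ideal_closed n (L i)"
    unfolding ideal_closed_def by (simp add: ideal_gen_add)
  show "{0} \<union> q ` {..<i} \<subseteq> L i" using q_in_L assms by auto
qed

definition xpart :: "monom \<Rightarrow> monom" where
  "xpart a = Abs_poly_mapping (\<lambda>k. if k < n then lookup a k else 0)"

definition ypart :: "monom \<Rightarrow> monom" where
  "ypart a = Abs_poly_mapping (\<lambda>k. if n \<le> k then lookup a k else 0)"

definition ydeg :: "monom \<Rightarrow> nat" where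
  "ydeg a = (\<Sum>j<m. lookup a (n+j))"

lemma lookup_xpart: "lookup (xpart a) k = (if k < n then lookup a k else 0)"
proof -
  have "finite {k. (if k < n then lookup a k else 0) \<noteq> 0}"
    by (rule finite_subset[of _ "keys a"]) (auto simp: in_keys_iff)
  then show ?thesis unfolding xpart_def by simp
qed

lemma lookup_ypart: "lookup (ypart a) k = (if n \<le> k then lookup a k else 0)"
proof -
  have "finite {k. (if n \<le> k then lookup a k else 0) \<noteq> 0}"
    by (rule finite_subset[of _ "keys a"]) (auto simp: in_keys_iff)
  then show ?thesis unfolding ypart_def by simp
qed

lemma xpart_plus_ypart: "xpart a + ypart a = a"
  by (rule poly_mapping_eqI) (simp add: lookup_add lookup_xpart lookup_ypart)

lemma keys_xpart: "keys (xpart a) \<subseteq> {..<n}"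
  by (auto simp: in_keys_iff lookup_xpart split: if_splits)

lemma keys_ypart: "keys (ypart a) \<subseteq> keys a"
  by (auto simp: in_keys_iff lookup_ypart split: if_splits)

lemma ypart_add_y: "n \<le> k \<Longrightarrow> ypart (a + single k c) = ypart a + single k c"
  by (rule poly_mapping_eqI) (auto simp: lookup_ypart lookup_add lookup_single when_def)

lemma xpart_add_y: "n \<le> k \<Longrightarrow> xpart (a + single k c) = xpart a"
  by (rule poly_mapping_eqI) (auto simp: lookup_xpart lookup_add lookup_single when_def)

lemma lookup_y_ypart: "ypart x = \<beta> \<Longrightarrow> lookup x (n+i) = lookup \<beta> (n+i)"
  by (drule arg_cong[of _ _ "\<lambda>x. lookup x (n+i)"]) (simp add: lookup_ypart)

lemma ydeg_add: "ydeg (a + b) = ydeg a + ydeg b"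
  by (simp add: ydeg_def lookup_add sum.distrib)

lemma ydeg_single: "j < m \<Longrightarrow> ydeg (single (n+j) c) = c"
proof -
  assume j: "j < m"
  have "ydeg (single (n+j) c) = (\<Sum>l<m. if l = j then c else 0)"
    unfolding ydeg_def by (rule sum.cong) (auto simp: lookup_single when_def)
  also have "\<dots> = c" using j by simp
  finally show ?thesis .
qed

lemma ydeg_ypart: "ypart M = ypart M' \<Longrightarrow> ydeg M = ydeg M'"
proof -
  assume e: "ypart M = ypart M'"
  have "lookup M (n+j) = lookup M' (n+j)" for j
    using arg_cong[OF e, of "\<lambda>x. lookup x (n+j)"] by (simp add: lookup_ypart)
  then show ?thesis by (simp add: ydeg_def)
qed

lemma ydeg_xonly: "keys b \<subseteq> {..<n} \<Longrightarrow> ydeg b = 0"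
  by (simp add: ydeg_def lookup_xmonom_y)

subsection \<open>The normal forms Nf i\<close>

definition ysqfree :: "monom \<Rightarrow> monom" where
  "ysqfree a = Abs_poly_mapping (\<lambda>k. if n \<le> k \<and> k < n+m then lookup a k mod 2 else lookup a k)"

definition red :: "nat \<Rightarrow> monom \<Rightarrow> 'k mpoly" where
  "red i a = (if \<exists>k<i. lookup a (n+k) \<noteq> 0 then 0
     else single (ysqfree a) 1 * (\<Prod>j\<in>{i..<m}. (- q j) ^ (lookup a (n+j) div 2)))"

definition Nf :: "nat \<Rightarrow> 'k mpoly \<Rightarrow> 'k mpoly" where
  "Nf i = lin_ext (red i)"

definition reduced :: "nat \<Rightarrow> monom \<Rightarrow> bool" where
  "reduced i a \<longleftrightarrow> (\<forall>k<i. lookup a (n+k) = 0) \<and> (\<forall>j<m. lookup a (n+j) \<le> 1)"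

lemma lookup_ysqfree: "lookup (ysqfree a) k = (if n \<le> k \<and> k < n+m then lookup a k mod 2 else lookup a k)"
proof -
  have "finite {k. (if n \<le> k \<and> k < n+m then lookup a k mod 2 else lookup a k) \<noteq> 0}"
    by (rule finite_subset[of _ "keys a"]) (auto simp: in_keys_iff)
  then show ?thesis unfolding ysqfree_def by simp
qed

lemma keys_ysqfree: "keys (ysqfree a) \<subseteq> keys a"
  by (auto simp: in_keys_iff lookup_ysqfree split: if_splits)

lemma ysqfree_add_xmonom: assumes "keys b \<subseteq> {..<n}" shows "ysqfree (a + b) = ysqfree a + b"
  by (rule poly_mapping_eqI) (simp add: lookup_add lookup_ysqfree lookup_xmonom_y[OF assms])

lemma ydeg_ysqfree_less:
  assumes "j < m" "2 \<le> lookup a (n+j)"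
  shows "ydeg (ysqfree a) < ydeg a"
  unfolding ydeg_def
proof (rule sum_strict_mono_ex1)
  show "\<forall>x\<in>{..<m}. lookup (ysqfree a) (n + x) \<le> lookup a (n + x)" by (simp add: lookup_ysqfree)
  show "\<exists>x\<in>{..<m}. lookup (ysqfree a) (n + x) < lookup a (n + x)"
    using assms by (intro bexI[of _ j]) (auto simp: lookup_ysqfree)
qed simp

lemma red_add_xmonom: assumes b: "keys b \<subseteq> {..<n}" shows "red i (a + b) = single b 1 * red i a"
proof -
  have l: "lookup (a + b) (n+k) = lookup a (n+k)" for k by (simp add: lookup_add lookup_xmonom_y[OF b])
  show ?thesis
  proof (cases "\<exists>k<i. lookup a (n+k) \<noteq> 0")
    case True then show ?thesis by (simp add: red_def l)
  next
    case False
    have e: "single (ysqfree a + b) 1 = single b 1 * (single (ysqfree a) 1 :: 'k mpoly)" by (simp add: mult_single add.commute)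
    have nz: "\<not>(\<exists>k<i. lookup a (n+k) \<noteq> 0)" using False .
    show ?thesis unfolding red_def l ysqfree_add_xmonom[OF b] if_not_P[OF nz] e by (simp only: mult.assoc)
  qed
qed

lemma red_add_ysquare:
  assumes ij: "i \<le> j" "j < m"
  shows "red i (a + single (n+j) 2) = - q j * red i a"
proof -
  let ?e = "single (n+j) (2::nat)"
  have le: "lookup ?e k = (if k = n + j then 2 else 0)" for k by (simp add: lookup_single)
  have r: "ysqfree (a + ?e) = ysqfree a"
    by (rule poly_mapping_eqI) (use ij in \<open>auto simp: lookup_add lookup_ysqfree le\<close>)
  have c: "(\<exists>k<i. lookup (a + ?e) (n+k) \<noteq> 0) \<longleftrightarrow> (\<exists>k<i. lookup a (n+k) \<noteq> 0)"
  proof -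
    have "\<forall>k<i. lookup (a + ?e) (n+k) = lookup a (n+k)" using ij by (auto simp: lookup_add le)
    then show ?thesis by auto
  qed
  have fin: "finite {i..<m}" "j \<in> {i..<m}" using ij by auto
  have p: "(\<Prod>l\<in>{i..<m}. (- q l) ^ (lookup (a + ?e) (n+l) div 2))
     = - q j * (\<Prod>l\<in>{i..<m}. (- q l) ^ (lookup a (n+l) div 2))"
  proof -
    have "(\<Prod>l\<in>{i..<m}. (- q l) ^ (lookup (a + ?e) (n+l) div 2))
        = (- q j) ^ (lookup (a + ?e) (n+j) div 2) * (\<Prod>l\<in>{i..<m} - {j}. (- q l) ^ (lookup (a + ?e) (n+l) div 2))"
      using fin by (simp add: prod.remove)
    also have "\<dots> = (- q j) * ((- q j) ^ (lookup a (n+j) div 2) * (\<Prod>l\<in>{i..<m} - {j}. (- q l) ^ (lookup a (n+l) div 2)))"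
      by (simp add: lookup_add le)
    also have "\<dots> = - q j * (\<Prod>l\<in>{i..<m}. (- q l) ^ (lookup a (n+l) div 2))"
      using fin by (simp add: prod.remove)
    finally show ?thesis .
  qed
  show ?thesis
  proof (cases "\<exists>k<i. lookup a (n+k) \<noteq> 0")
    case True
    then show ?thesis unfolding red_def c if_P[OF True] by simp
  next
    case False
    have F2: "\<not>(\<exists>k<i. lookup (a + ?e) (n+k) \<noteq> 0)" using False c by simp
    show ?thesis unfolding red_def if_not_P[OF False] if_not_P[OF F2] r p by (simp only: ac_simps)
  qed
qed

lemma red_killed:
  assumes "k < i" "0 < lookup c (n+k)"
  shows "red i (a + c) = 0"
proof -
  have "lookup (a + c) (n+k) \<noteq> 0" using assms by (simp add: lookup_add)
  then show ?thesis using assms unfolding red_def by auto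
qed

lemma red_reduced:
  assumes "reduced i a"
  shows "red i a = single a 1"
proof -
  have r: "ysqfree a = a"
  proof (rule poly_mapping_eqI)
    fix k
    show "lookup (ysqfree a) k = lookup a k"
    proof (cases "n \<le> k \<and> k < n+m")
      case True
      then obtain j where "k = n + j" "j < m" by (metis add_diff_inverse_nat add_less_cancel_left not_le)
      then have "lookup a k \<le> 1" using assms by (simp add: reduced_def)
      then show ?thesis using True by (simp add: lookup_ysqfree)
    qed (auto simp: lookup_ysqfree)
  qed
  have p: "(\<Prod>j\<in>{i..<m}. (- q j) ^ (lookup a (n+j) div 2)) = 1"
    by (rule prod.neutral) (use assms in \<open>auto simp: reduced_def\<close>)
  show ?thesis using assms unfolding red_def r p by (auto simp: reduced_def)
qed

lemma keys_red:
  assumes a: "keys a \<subseteq> {..<n+m}" and i: "i \<le> m" and M: "M \<in> keys (red i a)"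
  shows "reduced i M \<and> keys M \<subseteq> {..<n+m} \<and> ypart M = ypart (ysqfree a)"
proof -
  let ?P = "(\<Prod>j\<in>{i..<m}. (- q j) ^ (lookup a (n+j) div 2))"
  have nz: "\<not> (\<exists>k<i. lookup a (n+k) \<noteq> 0)" using M by (auto simp: red_def split: if_splits)
  from M have Mk: "M \<in> keys (single (ysqfree a) 1 * ?P)" unfolding red_def if_not_P[OF nz] .
  have Pp: "?P \<in> polyring n"
    by (rule polyring_prod) (auto intro!: polyring_pow polyring_uminus q_poly)
  have "M \<in> {x + b |x b. x \<in> keys (single (ysqfree a) (1::'k)) \<and> b \<in> keys ?P}"
    using subsetD[OF keys_mult Mk] .
  then obtain b where Mb: "M = ysqfree a + b" and b: "b \<in> keys ?P" by auto
  have bk: "keys b \<subseteq> {..<n}" using Pp b by (simp add: polyring_iff)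
  have red: "reduced i M"
    unfolding reduced_def
  proof (intro conjI allI impI)
    fix k assume "k < i"
    then show "lookup M (n+k) = 0" using nz i by (simp add: Mb lookup_add lookup_xmonom_y[OF bk] lookup_ysqfree)
  next
    fix j assume "j < m"
    then show "lookup M (n+j) \<le> 1" by (simp add: Mb lookup_add lookup_xmonom_y[OF bk] lookup_ysqfree)
  qed
  have "keys M \<subseteq> keys (ysqfree a) \<union> keys b" unfolding Mb by (rule keys_add)
  also have "\<dots> \<subseteq> {..<n+m}" using keys_ysqfree[of a] a bk by auto
  finally have km: "keys M \<subseteq> {..<n+m}" .
  have "ypart M = ypart (ysqfree a)"
    by (rule poly_mapping_eqI) (simp add: lookup_ypart Mb lookup_add lookup_xmonom_y[OF bk])
  then show ?thesis using red km by simp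
qed

lemma Nf_add: "Nf i (p + p') = Nf i p + Nf i p'" by (simp add: Nf_def lin_ext_add)

lemma Nf_zero[simp]: "Nf i 0 = 0" by (simp add: Nf_def)

lemma lin_ext_mult_xpoly:
  assumes h: "\<And>a b. keys b \<subseteq> {..<n} \<Longrightarrow> h (a + b) = single b 1 * h a" and s: "s \<in> polyring n"
  shows "lin_ext h (r * s) = s * lin_ext h r"
proof -
  have "lin_ext h (r*s) = (\<Sum>b\<in>keys s. single 0 (lookup s b) * lin_ext (\<lambda>a. h (a+b)) r)" by (rule lin_ext_mult)
  also have "\<dots> = (\<Sum>b\<in>keys s. (single 0 (lookup s b) * single b 1) * lin_ext h r)"
  proof (intro sum.cong refl)
    fix b assume "b \<in> keys s"
    then have "keys b \<subseteq> {..<n}" using s by (simp add: polyring_iff)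
    then have "lin_ext (\<lambda>a. h (a+b)) r = single b 1 * lin_ext h r" by (simp add: h lin_ext_mult_left)
    then show "single 0 (lookup s b) * lin_ext (\<lambda>a. h (a+b)) r = (single 0 (lookup s b) * single b 1) * lin_ext h r"
      by (simp add: mult.assoc)
  qed
  also have "\<dots> = (\<Sum>b\<in>keys s. single b (lookup s b)) * lin_ext h r"
    by (simp add: single0_mult_single sum_distrib_right)
  also have "\<dots> = s * lin_ext h r" by (simp flip: poly_sum_terms)
  finally show ?thesis .
qed

lemma Nf_mult_xpoly: "s \<in> polyring n \<Longrightarrow> Nf i (r * s) = s * Nf i r"
  unfolding Nf_def by (rule lin_ext_mult_xpoly) (simp add: red_add_xmonom)

lemma Nf_mult_killed_y: "k < i \<Longrightarrow> Nf i (r * Var (n+k)) = 0"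
  unfolding Nf_def Var_y lin_ext_mult_monom by (simp add: red_killed)

lemma Nf_mult_ysquare: assumes "i \<le> j" "j < m" shows "Nf i (r * Var (n+j) ^ 2) = - q j * Nf i r"
proof -
  have "lin_ext (\<lambda>a. red i (a + single (n+j) 2)) r = lin_ext (\<lambda>a. (- q j) * red i a) r"
    by (rule lin_ext_cong) (simp add: red_add_ysquare assms)
  then show ?thesis unfolding Nf_def Var_y_square lin_ext_mult_monom lin_ext_mult_left .
qed

lemma Nf_mult_killed_ysquare: "j < i \<Longrightarrow> Nf i (r * Var (n+j) ^ 2) = 0"
  unfolding Nf_def Var_y_square lin_ext_mult_monom by (simp add: red_killed)

lemma keys_Nf:
  assumes "p \<in> polyring (n+m)" "i \<le> m" "M \<in> keys (Nf i p)"
  shows "reduced i M \<and> keys M \<subseteq> {..<n+m}"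
proof -
  have "M \<in> (\<Union>a\<in>keys p. keys (red i a))"
    using subsetD[OF keys_lin_ext assms(3)[unfolded Nf_def]] .
  then obtain a where a: "a \<in> keys p" "M \<in> keys (red i a)" by blast
  have "keys a \<subseteq> {..<n+m}" using assms(1) a(1) by (simp add: polyring_iff)
  from keys_red[OF this assms(2) a(2)] show ?thesis by simp
qed

lemma Nf_polyring: assumes "p \<in> polyring (n+m)" "i \<le> m" shows "Nf i p \<in> polyring (n+m)"
  unfolding polyring_iff[of "Nf i p"]
proof
  fix M assume "M \<in> keys (Nf i p)"
  from keys_Nf[OF assms this] show "keys M \<subseteq> {..<n+m}" by simp
qed

text \<open>Fact (1): the reduction of a monomial is congruent to it modulo L i (induction on the
  y-degree), hence f - Nf i f \<in> L i.\<close>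

lemma monom_red_cases:
  obtains (killed) k where "k < i" "lookup a (n+k) \<noteq> 0"
    | (square) j where "i \<le> j" "j < m" "2 \<le> lookup a (n+j)"
    | (reduced) "reduced i a"
proof (cases "\<exists>k<i. lookup a (n+k) \<noteq> 0")
  case True
  then show thesis using that(1) by blast
next
  case nokill: False
  show thesis
  proof (cases "\<exists>j<m. 2 \<le> lookup a (n+j)")
    case True
    then obtain j where j: "j < m" "2 \<le> lookup a (n+j)" by blast
    with nokill have "i \<le> j" by (metis not_le not_numeral_le_zero)
    with j show thesis using that(2) by blast
  next
    case False
    with nokill have "reduced i a" by (auto simp: reduced_def not_le less_Suc_eq_le numeral_2_eq_2)
    then show thesis using that(3) by blast
  qed
qed

lemma monom_minus_red_killed:
  assumes "k < i" "lookup a (n+k) \<noteq> 0" "keys a \<subseteq> {..<n+m}"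
  shows "single a 1 - red i a \<in> L i"
proof -
  let ?a = "a - single (n+k) 1"
  have sp: "a = ?a + single (n+k) 1" "keys ?a \<subseteq> keys a"
    using monom_split[of 1 a "n+k"] assms(2) by auto
  have "red i a = 0" by (subst sp(1), rule red_killed[OF assms(1)]) simp
  moreover have "single a 1 = single ?a 1 * (Var (n+k) :: 'k mpoly)"
    by (subst sp(1)) (simp add: Var_y mult_single)
  moreover have "single ?a 1 * (Var (n+k) :: 'k mpoly) \<in> L i"
    using sp(2) assms by (intro ideal_gen_mult y_in_L polyring_single) auto
  ultimately show ?thesis by simp
qed

lemma monom_minus_red_in_L:
  assumes "keys a \<subseteq> {..<n+m}"
  shows "single a 1 - red i a \<in> L i"
  using assms
proof (induction "ydeg a" arbitrary: a rule: less_induct)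
  case less
  from monom_red_cases[of i a] show ?case
  proof cases
    case (killed k)
    then show ?thesis using less.prems by (rule monom_minus_red_killed)
  next
    case (square j)
    let ?a = "a - single (n+j) 2"
    have sp: "a = ?a + single (n+j) 2" "keys ?a \<subseteq> keys a"
      using monom_split[of 2 a "n+j"] square by auto
    have ka: "keys ?a \<subseteq> {..<n+m}" using sp(2) less.prems by auto
    have "ydeg ?a < ydeg a"
      using arg_cong[OF sp(1), of ydeg] square by (simp add: ydeg_add ydeg_single)
    then have IH: "single ?a 1 - red i ?a \<in> L i" using ka by (rule less.hyps)
    have r: "red i a = - q j * red i ?a" by (subst sp(1), rule red_add_ysquare[OF square(1,2)])
    have s: "single a 1 = single ?a 1 * (Var (n+j) ^ 2 :: 'k mpoly)"
      by (subst sp(1)) (simp add: Var_y_square mult_single)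
    have e: "single a 1 - red i a = single ?a 1 * (Var (n+j) ^ 2 + q j) - q j * (single ?a 1 - red i ?a)"
      unfolding r s by (simp add: algebra_simps)
    have "q j \<in> polyring (n+m)" using q_poly[OF square(2)] by (rule polyring_mono) simp
    then show ?thesis unfolding e
      by (intro ideal_gen_diff ideal_gen_mult gen_in_L IH polyring_single ka square(2))
  next
    case reduced
    then show ?thesis by (simp add: red_reduced)
  qed
qed

lemma minus_Nf_in_L:
  assumes "f \<in> polyring (n+m)" "i \<le> m"
  shows "f - Nf i f \<in> L i"
proof -
  have "f - Nf i f = lin_ext (\<lambda>a. single a 1 - red i a) f"
    unfolding lin_ext_diff_fun lin_ext_id Nf_def ..
  also have "\<dots> \<in> L i"
    using assms by (intro ideal_gen_lin_ext monom_minus_red_in_L) (auto simp: polyring_iff)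
  finally show ?thesis .
qed

text \<open>ycoef \<beta> p \<in> S_n is the coefficient of the y-monomial \<beta> in p, viewed as a polynomial in
  the y's with coefficients in S_n.\<close>

definition ycoef_monom :: "monom \<Rightarrow> monom \<Rightarrow> 'k mpoly" where
  "ycoef_monom b a = (if ypart a = b then single (xpart a) 1 else 0)"

definition ycoef :: "monom \<Rightarrow> 'k mpoly \<Rightarrow> 'k mpoly" where
  "ycoef b = lin_ext (ycoef_monom b)"

lemma ycoef_monom_add_xmonom:
  assumes b: "keys b \<subseteq> {..<n}"
  shows "ycoef_monom \<beta> (a + b) = single b 1 * ycoef_monom \<beta> a"
proof -
  have y: "ypart (a + b) = ypart a"
    by (rule poly_mapping_eqI) (simp add: lookup_ypart lookup_add lookup_xmonom_y[OF b])
  have x: "xpart (a + b) = xpart a + b"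
    by (rule poly_mapping_eqI) (auto simp: lookup_xpart lookup_add lookup_xmonom_y[OF b])
  show ?thesis unfolding ycoef_monom_def y x by (simp add: mult_single add.commute)
qed

lemma ycoef_mult_xpoly: "s \<in> polyring n \<Longrightarrow> ycoef \<beta> (r * s) = s * ycoef \<beta> r"
  unfolding ycoef_def by (rule lin_ext_mult_xpoly) (simp add: ycoef_monom_add_xmonom)

lemma ycoef_monom_polyring: "ycoef_monom \<beta> a \<in> polyring n"
  unfolding ycoef_monom_def using keys_xpart by (auto intro: polyring_single)

lemma ycoef_polyring: "ycoef \<beta> p \<in> polyring n"
  unfolding ycoef_def by (rule polyring_lin_ext) (rule ycoef_monom_polyring)

lemma ycoef_add: "ycoef b (p + p') = ycoef b p + ycoef b p'" by (simp add: ycoef_def lin_ext_add)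

lemma ycoef_zero[simp]: "ycoef b 0 = 0" by (simp add: ycoef_def)

lemma ycoef_single: "ycoef \<beta> (single a 1) = ycoef_monom \<beta> a"
  by (simp add: ycoef_def lin_ext_single)

lemma ycoef_monom_add_y:
  "n \<le> k \<Longrightarrow> ycoef_monom \<beta> (a + single k c)
    = (if ypart a + single k c = \<beta> then single (xpart a) 1 else 0)"
  by (simp add: ycoef_monom_def ypart_add_y xpart_add_y)

lemma ycoef_expansion: "p = (\<Sum>\<beta>\<in>ypart ` keys p. ycoef \<beta> p * single \<beta> 1)"
proof -
  have "(\<Sum>\<beta>\<in>ypart ` keys p. ycoef \<beta> p * single \<beta> 1)
      = lin_ext (\<lambda>a. \<Sum>\<beta>\<in>ypart ` keys p. ycoef_monom \<beta> a * single \<beta> 1) p"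
    unfolding lin_ext_sum_fun ycoef_def lin_ext_mult_right ..
  also have "\<dots> = lin_ext (\<lambda>a. single a 1) p"
  proof (rule lin_ext_cong)
    fix a assume a: "a \<in> keys p"
    have "(\<Sum>\<beta>\<in>ypart ` keys p. ycoef_monom \<beta> a * single \<beta> 1)
        = (\<Sum>\<beta>\<in>ypart ` keys p. if ypart a = \<beta> then single (xpart a) 1 * single \<beta> 1 else 0)"
      unfolding ycoef_monom_def by (rule sum.cong) auto
    also have "\<dots> = single (xpart a) 1 * single (ypart a) 1" using a by (simp add: sum.delta)
    also have "\<dots> = single a 1" by (simp add: mult_single xpart_plus_ypart)
    finally show "(\<Sum>\<beta>\<in>ypart ` keys p. ycoef_monom \<beta> a * single \<beta> 1) = single a 1" .
  qed
  also have "\<dots> = p" by (rule lin_ext_id)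
  finally show ?thesis by simp
qed

lemma in_L_if_ycoefs_in_Q:
  assumes p: "p \<in> polyring (n+m)" and i: "i \<le> m" and c: "\<forall>\<beta>. ycoef \<beta> p \<in> Q i"
  shows "p \<in> L i"
proof -
  have "(\<Sum>\<beta>\<in>ypart ` keys p. ycoef \<beta> p * single \<beta> 1) \<in> L i"
  proof (rule ideal_gen_sum)
    fix \<beta> assume "\<beta> \<in> ypart ` keys p"
    then obtain a where a: "a \<in> keys p" "\<beta> = ypart a" by blast
    have "keys \<beta> \<subseteq> {..<n+m}" using a keys_ypart[of a] p by (auto simp: polyring_iff)
    then have "single \<beta> 1 * ycoef \<beta> p \<in> L i"
      using c Q_sub_L[OF i] by (intro ideal_gen_mult polyring_single) auto
    then show "ycoef \<beta> p * single \<beta> 1 \<in> L i" by (simp add: mult.commute)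
  qed
  then show ?thesis using ycoef_expansion[of p] by simp
qed

text \<open>Fact (2): the polynomials P such that all y-coefficients of Nf i (r * P) lie in Q i form an
  ideal containing the generators of L i.\<close>

lemma Nf_ycoef_in_Q_ideal_closed:
  "ideal_closed (n+m) {P. \<forall>r \<beta>. ycoef \<beta> (Nf i (r * P)) \<in> Q i}" (is "ideal_closed _ ?X")
  unfolding ideal_closed_def
proof (intro conjI ballI)
  show "0 \<in> ?X" by simp
next
  fix p p' assume "p \<in> ?X" "p' \<in> ?X"
  then show "p + p' \<in> ?X" by (simp add: distrib_left Nf_add ycoef_add ideal_gen_add)
next
  fix p r assume "p \<in> ?X"
  then show "r * p \<in> ?X" by (simp flip: mult.assoc)
qed

lemma ycoef_Nf_gen_multiple:
  assumes j: "j < m"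
  shows "ycoef \<beta> (Nf i (r * (Var (n+j) ^ 2 + q j))) \<in> Q i"
proof -
  have e: "Nf i (r * (Var (n+j) ^ 2 + q j)) = Nf i (r * Var (n+j) ^ 2) + q j * Nf i r"
    by (simp add: distrib_left Nf_add Nf_mult_xpoly[OF q_poly[OF j]])
  show ?thesis
  proof (cases "i \<le> j")
    case True
    then show ?thesis unfolding e Nf_mult_ysquare[OF True j] by simp
  next
    case False
    then have "ycoef \<beta> (Nf i (r * (Var (n+j) ^ 2 + q j))) = ycoef \<beta> (Nf i r * q j)"
      unfolding e using Nf_mult_killed_ysquare[of j i r] by (simp add: mult.commute)
    also have "\<dots> = q j * ycoef \<beta> (Nf i r)" by (rule ycoef_mult_xpoly[OF q_poly[OF j]])
    also have "\<dots> = ycoef \<beta> (Nf i r) * q j" by (rule mult.commute)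
    also have "\<dots> \<in> Q i" using False by (intro ideal_gen_mult ideal_gen_gen ycoef_polyring) auto
    finally show ?thesis .
  qed
qed

lemma ycoef_Nf_in_Q:
  assumes "P \<in> L i"
  shows "ycoef \<beta> (Nf i P) \<in> Q i"
proof -
  let ?X = "{P. \<forall>r \<beta>. ycoef \<beta> (Nf i (r * P)) \<in> Q i}"
  have "J \<subseteq> ?X"
    by (rule ideal_gen_least[OF Nf_ycoef_in_Q_ideal_closed]) (use ycoef_Nf_gen_multiple in blast)
  moreover have "Var (n+k) \<in> ?X" if "k < i" for k using that by (simp add: Nf_mult_killed_y)
  ultimately have "L i \<subseteq> ?X" by (intro ideal_gen_least[OF Nf_ycoef_in_Q_ideal_closed]) auto
  then have "ycoef \<beta> (Nf i (1 * P)) \<in> Q i" using assms by blast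
  then show ?thesis by simp
qed

lemma Nf0_vanishes_on_J:
  assumes "P \<in> J"
  shows "Nf 0 P = 0"
proof -
  have "P \<in> L 0" using assms by (intro ideal_gen_gen) simp
  then have c: "ycoef \<beta> (Nf 0 P) = 0" for \<beta>
    using ycoef_Nf_in_Q[of P 0 \<beta>] ideal_gen_zero_only[of n] by auto
  show ?thesis by (subst ycoef_expansion) (simp add: c)
qed

subsection \<open>The generators y_j^2 + q_j form a quadratic Groebner basis\<close>

definition yord :: "monom \<Rightarrow> monom \<Rightarrow> bool" where
  "yord a b \<longleftrightarrow> ydeg a < ydeg b \<or> (ydeg a = ydeg b \<and> a \<le> b)"

lemma yord_antisym: "yord a b \<Longrightarrow> yord b a \<Longrightarrow> a = b"
  unfolding yord_def by auto

lemma term_order_yord: "term_order (n+m) yord"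
  unfolding term_order_def Let_def
proof (intro conjI ballI impI)
  fix a show "yord a a" by (simp add: yord_def)
next
  fix a b assume "yord a b \<and> yord b a" then show "a = b" using yord_antisym by blast
next
  fix a b c assume "yord a b \<and> yord b c" then show "yord a c" unfolding yord_def by auto
next
  fix a b show "yord a b \<or> yord b a" unfolding yord_def by auto
next
  fix a show "yord 0 a" unfolding yord_def using zero_le_monom[of a] by (auto simp: ydeg_def)
next
  fix a b c assume "yord a b" then show "yord (a + c) (b + c)"
    unfolding yord_def by (auto simp: ydeg_add add_right_mono)
qed

lemma lead_monom_eqI:
  assumes "M \<in> keys p" "\<forall>m'\<in>keys p. yord m' M"
  shows "lead_monom yord p = M"
  unfolding lead_monom_def
proof (rule the_equality)
  show "M \<in> keys p \<and> (\<forall>m'\<in>keys p. yord m' M)" using assms by simp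
  fix x assume "x \<in> keys p \<and> (\<forall>m'\<in>keys p. yord m' x)"
  then show "x = M" using assms yord_antisym by blast
qed

lemma yord_max_exists:
  assumes "p \<noteq> 0"
  shows "\<exists>M\<in>keys p. \<forall>m'\<in>keys p. yord m' M"
proof -
  have ne: "keys p \<noteq> {}" using assms by simp
  define D where "D = Max (ydeg ` keys p)"
  have D: "D \<in> ydeg ` keys p" "\<forall>a\<in>keys p. ydeg a \<le> D" using ne by (auto simp: D_def)
  define S where "S = {a\<in>keys p. ydeg a = D}"
  have Sne: "S \<noteq> {}" "finite S" using D(1) by (auto simp: S_def)
  define M where "M = Max S"
  have M: "M \<in> S" "\<forall>a\<in>S. a \<le> M" using Sne by (auto simp: M_def)
  show ?thesis
  proof (intro bexI ballI)
    show "M \<in> keys p" using M(1) by (simp add: S_def)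
    fix m' assume m': "m' \<in> keys p"
    show "yord m' M"
    proof (cases "ydeg m' = D")
      case True then show ?thesis using M m' by (auto simp: yord_def S_def)
    next
      case False then show ?thesis using M m' D(2) by (auto simp: yord_def S_def order.strict_iff_order)
    qed
  qed
qed

text \<open>The leading monomial of y_j^2 + q_j is y_j^2, since q_j only involves the x-variables.\<close>

lemma lead_monom_gen:
  assumes j: "j < m"
  shows "Var (n+j) ^ 2 + q j \<noteq> 0" "lead_monom yord (Var (n+j) ^ 2 + q j) = single (n+j) 2"
proof -
  let ?E = "single (n+j) (2::nat)"
  have Eq: "?E \<notin> keys (q j)"
  proof
    assume "?E \<in> keys (q j)"
    then have "keys ?E \<subseteq> {..<n}" using q_keys[OF j] by blast
    then show False by simp
  qed
  have E: "?E \<in> keys (Var (n+j) ^ 2 + q j)"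
    using Eq by (simp add: Var_y_square in_keys_iff lookup_add)
  then show "Var (n+j) ^ 2 + q j \<noteq> 0" by auto
  have yE: "ydeg ?E = 2" using j by (simp add: ydeg_single)
  have "\<forall>m'\<in>keys (Var (n+j) ^ 2 + q j). yord m' ?E"
  proof
    fix m' assume "m' \<in> keys (Var (n+j) ^ 2 + q j)"
    then have "m' \<in> keys (single ?E (1::'k)) \<union> keys (q j)"
      using keys_add[of "single ?E (1::'k)" "q j"] by (auto simp: Var_y_square)
    then show "yord m' ?E"
    proof
      assume "m' \<in> keys (single ?E (1::'k))" then show ?thesis by (simp add: yord_def)
    next
      assume "m' \<in> keys (q j)"
      then have "ydeg m' = 0" using q_keys[OF j] ydeg_xonly by blast
      then show ?thesis using yE by (simp add: yord_def)
    qed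
  qed
  then show "lead_monom yord (Var (n+j) ^ 2 + q j) = ?E" using lead_monom_eqI E by blast
qed

text \<open>If the leading monomial M of f were reduced, Nf 0 f would still contain M with the
  coefficient it has in f: the other monomials of f reduce to monomials of smaller y-degree.
  Since Nf 0 vanishes on J, leading monomials of J are divisible by some y_j^2.\<close>

lemma lookup_red0_non_max:
  assumes a: "keys a \<subseteq> {..<n+m}" "a \<noteq> M" "yord a M"
  shows "lookup (red 0 a) M = 0"
proof (cases "\<forall>j<m. lookup a (n+j) \<le> 1")
  case True
  then have "reduced 0 a" by (simp add: reduced_def)
  then show ?thesis using a(2) by (simp add: red_reduced lookup_single when_def)
next
  case False
  then obtain j where j: "j < m" "2 \<le> lookup a (n+j)" by (auto simp: not_le)
  show ?thesis
  proof (rule ccontr)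
    assume "lookup (red 0 a) M \<noteq> 0"
    then have "M \<in> keys (red 0 a)" by (simp add: in_keys_iff)
    then have "ypart M = ypart (ysqfree a)" using keys_red[of a 0 M] a(1) by simp
    then have "ydeg M = ydeg (ysqfree a)" by (rule ydeg_ypart)
    also have "\<dots> < ydeg a" using ydeg_ysqfree_less[OF j] .
    finally show False using a(3) by (auto simp: yord_def)
  qed
qed

lemma lookup_Nf0_at_max:
  assumes f: "f \<in> polyring (n+m)" and M: "M \<in> keys f" "\<forall>a\<in>keys f. yord a M"
    and rM: "reduced 0 M"
  shows "lookup (Nf 0 f) M = lookup f M"
proof -
  have contrib: "lookup f a * lookup (red 0 a) M = (if a = M then lookup f M else 0)"
    if a: "a \<in> keys f" for a
  proof (cases "a = M")
    case True
    then show ?thesis using red_reduced[OF rM] by simp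
  next
    case False
    have "keys a \<subseteq> {..<n+m}" using f a by (simp add: polyring_iff)
    then have "lookup (red 0 a) M = 0" using lookup_red0_non_max False M(2) a by blast
    then show ?thesis using False by simp
  qed
  have "lookup (Nf 0 f) M = (\<Sum>a\<in>keys f. if a = M then lookup f M else 0)"
    unfolding Nf_def lookup_lin_ext by (rule sum.cong[OF refl]) (rule contrib)
  also have "\<dots> = lookup f M" using M(1) by simp
  finally show ?thesis .
qed

lemma lead_monom_in_J:
  assumes f: "f \<in> J" "f \<noteq> 0"
  shows "\<exists>j<m. \<exists>u. lead_monom yord f = single (n+j) 2 + u"
proof -
  obtain M where M: "M \<in> keys f" "\<forall>a\<in>keys f. yord a M" using yord_max_exists[OF f(2)] by blast
  have "\<exists>j<m. 2 \<le> lookup M (n+j)"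
  proof (rule ccontr)
    assume "\<not> (\<exists>j<m. 2 \<le> lookup M (n+j))"
    then have "reduced 0 M" by (auto simp: reduced_def)
    moreover have "f \<in> polyring (n+m)" using J_poly f(1) by auto
    ultimately have "lookup f M = 0"
      using lookup_Nf0_at_max[OF _ M] Nf0_vanishes_on_J[OF f(1)] by simp
    then show False using M(1) by (simp add: in_keys_iff)
  qed
  then obtain j where j: "j < m" "2 \<le> lookup M (n+j)" by blast
  have "lead_monom yord f = single (n+j) 2 + (M - single (n+j) 2)"
    using lead_monom_eqI[OF M] monom_split(1)[OF j(2)] by (simp add: add.commute)
  then show ?thesis using j(1) by blast
qed

lemma J_G_quadratic: "G_quadratic (n+m) J"
  unfolding G_quadratic_def
proof (intro conjI exI[of _ Var] exI[of _ yord] exI[of _ "(\<lambda>i. Var (n + i) ^ 2 + q i) ` {..<m}"])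
  show "std_graded (n+m) J" by (rule std_graded_quadric_ideal) (auto intro: gen_quadric)
  show "coord_change (n+m) Var" unfolding coord_change_def
    by (intro conjI allI impI exI[of _ Var]) (simp_all add: linear_Var subst_Var)
  show "term_order (n+m) yord" by (rule term_order_yord)
  show "\<forall>g\<in>(\<lambda>i. Var (n + i) ^ 2 + q i) ` {..<m}. quadric (n+m) g" by (auto intro: gen_quadric)
  have sJ: "subst Var ` J = J" by (simp add: subst_Var)
  show "groebner_basis yord ((\<lambda>i. Var (n + i) ^ 2 + q i) ` {..<m}) (subst Var ` J)"
    unfolding groebner_basis_def sJ
  proof (intro conjI ballI impI)
    show "finite ((\<lambda>i. Var (n + i) ^ 2 + q i) ` {..<m})" by simp
    show "(\<lambda>i. Var (n + i) ^ 2 + q i) ` {..<m} \<subseteq> J" using gen_in_J by auto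
    fix f assume f: "f \<in> J" "f \<noteq> 0"
    obtain j u where j: "j < m" "lead_monom yord f = single (n+j) 2 + u" using lead_monom_in_J[OF f] by blast
    show "\<exists>g\<in>(\<lambda>i. Var (n + i) ^ 2 + q i) ` {..<m}.
            g \<noteq> 0 \<and> (\<exists>u. lead_monom yord f = lead_monom yord g + u)"
      using j lead_monom_gen[OF j(1)] by (intro bexI[of _ "Var (n + j) ^ 2 + q j"]) auto
  qed
qed

subsection \<open>y_0, ..., y_{m-1} is a regular sequence modulo J\<close>

lemma red_add_y_fresh:
  assumes "i < m" "reduced i a" "lookup a (n+i) = 0"
  shows "red i (a + single (n+i) 1) = single (a + single (n+i) 1) 1"
proof (rule red_reduced)
  show "reduced i (a + single (n+i) 1)"
    using assms unfolding reduced_def by (auto simp: lookup_add lookup_single when_def)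
qed

lemma red_add_y_present:
  assumes i: "i < m" and a: "reduced i a" "lookup a (n+i) = 1"
  shows "red i (a + single (n+i) 1) = - q i * single (a - single (n+i) 1) 1"
proof -
  let ?a = "a - single (n+i) 1"
  have split: "a = ?a + single (n+i) 1" using a(2) by (intro monom_split(1)) simp
  have "reduced i ?a"
    using a unfolding reduced_def by (auto simp: minus_poly_mapping.rep_eq lookup_single when_def)
  have "a + single (n+i) 1 = ?a + single (n+i) 2"
    by (subst (1) split) (simp add: add.assoc single_add[symmetric] numeral_2_eq_2)
  then have "red i (a + single (n+i) 1) = - q i * red i ?a" using red_add_ysquare[of i i ?a] i by simp
  then show ?thesis using red_reduced[OF \<open>reduced i ?a\<close>] by simp
qed

lemma ycoef_neg_q_mult: "i < m \<Longrightarrow> ycoef \<beta> (- q i * single x 1) = - q i * ycoef_monom \<beta> x"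
  using ycoef_mult_xpoly[OF polyring_uminus[OF q_poly], of i \<beta> "single x 1"]
  by (simp only: mult.commute ycoef_single)

lemma ycoef_Nf_mult_y:
  "ycoef \<beta> (Nf i (N * Var (n+i))) = lin_ext (\<lambda>a. ycoef \<beta> (red i (a + single (n+i) 1))) N"
  unfolding Nf_def Var_y lin_ext_mult_monom ycoef_def[of \<beta>] lin_ext_comp ..

lemma ycoef_Nf_mult_y_raise:
  assumes i: "i < m" and N: "\<And>a. a \<in> keys N \<Longrightarrow> reduced i a" and b1: "lookup \<beta> (n+i) = 1"
  shows "ycoef \<beta> (Nf i (N * Var (n+i))) = ycoef (\<beta> - single (n+i) 1) N"
  unfolding ycoef_Nf_mult_y ycoef_def[of "\<beta> - single (n+i) 1"]
proof (rule lin_ext_cong)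
  fix a assume "a \<in> keys N"
  then have ri: "reduced i a" by (rule N)
  show "ycoef \<beta> (red i (a + single (n+i) 1)) = ycoef_monom (\<beta> - single (n+i) 1) a"
  proof (cases "lookup a (n+i) = 0")
    case True
    have "ycoef \<beta> (red i (a + single (n+i) 1)) = ycoef_monom \<beta> (a + single (n+i) 1)"
      using red_add_y_fresh[OF i ri True] by (simp add: ycoef_single)
    also have "\<dots> = (if ypart a = \<beta> - single (n+i) 1 then single (xpart a) 1 else 0)"
      unfolding ycoef_monom_add_y[OF le_add1] using add_single_eq_iff[of \<beta> "n+i" "ypart a"] b1 by simp
    also have "\<dots> = ycoef_monom (\<beta> - single (n+i) 1) a" by (simp add: ycoef_monom_def)
    finally show ?thesis .
  next
    case False
    then have a1: "lookup a (n+i) = 1" using ri i unfolding reduced_def by force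
    have "ycoef \<beta> (red i (a + single (n+i) 1)) = - q i * ycoef_monom \<beta> (a - single (n+i) 1)"
      using red_add_y_present[OF i ri a1] ycoef_neg_q_mult[OF i] by simp
    also have "ycoef_monom \<beta> (a - single (n+i) 1) = 0"
      using lookup_y_ypart[of "a - single (n+i) 1" \<beta> i] a1 b1
      by (auto simp: ycoef_monom_def minus_poly_mapping.rep_eq)
    also have "ycoef_monom (\<beta> - single (n+i) 1) a = 0"
      using lookup_y_ypart[of a "\<beta> - single (n+i) 1" i] a1 b1
      by (auto simp: ycoef_monom_def minus_poly_mapping.rep_eq)
    ultimately show ?thesis by simp
  qed
qed

lemma ycoef_Nf_mult_y_lower:
  assumes i: "i < m" and N: "\<And>a. a \<in> keys N \<Longrightarrow> reduced i a" and b0: "lookup \<beta> (n+i) = 0"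
  shows "ycoef \<beta> (Nf i (N * Var (n+i))) = - q i * ycoef (\<beta> + single (n+i) 1) N"
  unfolding ycoef_Nf_mult_y ycoef_def[of "\<beta> + single (n+i) 1"] lin_ext_mult_left[symmetric]
proof (rule lin_ext_cong)
  fix a assume "a \<in> keys N"
  then have ri: "reduced i a" by (rule N)
  show "ycoef \<beta> (red i (a + single (n+i) 1)) = - q i * ycoef_monom (\<beta> + single (n+i) 1) a"
  proof (cases "lookup a (n+i) = 0")
    case True
    have "ycoef \<beta> (red i (a + single (n+i) 1)) = ycoef_monom \<beta> (a + single (n+i) 1)"
      using red_add_y_fresh[OF i ri True] by (simp add: ycoef_single)
    also have "ycoef_monom \<beta> (a + single (n+i) 1) = 0"
      using lookup_y_ypart[of "a + single (n+i) 1" \<beta> i] True b0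
      by (auto simp: ycoef_monom_def lookup_add)
    also have "ycoef_monom (\<beta> + single (n+i) 1) a = 0"
      using lookup_y_ypart[of a "\<beta> + single (n+i) 1" i] True b0
      by (auto simp: ycoef_monom_def lookup_add)
    ultimately show ?thesis by simp
  next
    case False
    then have a1: "lookup a (n+i) = 1" using ri i unfolding reduced_def by force
    have split: "a = (a - single (n+i) 1) + single (n+i) 1" using a1 by (intro monom_split(1)) simp
    have "ycoef \<beta> (red i (a + single (n+i) 1)) = - q i * ycoef_monom \<beta> (a - single (n+i) 1)"
      using red_add_y_present[OF i ri a1] ycoef_neg_q_mult[OF i] by simp
    also have "ycoef_monom \<beta> (a - single (n+i) 1) = ycoef_monom (\<beta> + single (n+i) 1) a"
    proof -
      have "ycoef_monom (\<beta> + single (n+i) 1) a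
          = ycoef_monom (\<beta> + single (n+i) 1) ((a - single (n+i) 1) + single (n+i) 1)"
        by (rule arg_cong[OF split])
      also have "\<dots> = ycoef_monom \<beta> (a - single (n+i) 1)"
        unfolding ycoef_monom_add_y[OF le_add1] by (simp add: ycoef_monom_def)
      finally show ?thesis by simp
    qed
    finally show ?thesis .
  qed
qed

lemma ycoef_high_y_exponent:
  assumes "i < m" "\<And>a. a \<in> keys N \<Longrightarrow> reduced i a" "2 \<le> lookup \<gamma> (n+i)"
  shows "ycoef \<gamma> N = 0"
proof -
  have "ycoef \<gamma> N = lin_ext (\<lambda>a. 0) N" unfolding ycoef_def
  proof (rule lin_ext_cong)
    fix a assume "a \<in> keys N"
    then have "lookup a (n+i) \<le> 1" using assms(1,2) unfolding reduced_def by blast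
    then show "ycoef_monom \<gamma> a = 0" using lookup_y_ypart[of a \<gamma> i] assms(3) by (auto simp: ycoef_monom_def)
  qed
  then show ?thesis by simp
qed

lemma y_regular_step:
  assumes reg: "\<forall>f\<in>polyring n. q i * f \<in> Q i \<longrightarrow> f \<in> Q i"
    and i: "i < m" and f: "f \<in> polyring (n+m)" and yf: "Var (n+i) * f \<in> L i"
  shows "f \<in> L i"
proof -
  define N where "N = Nf i f"
  let ?e = "single (n+i) 1 :: monom"
  have im: "i \<le> m" using i by simp
  have fN: "f - N \<in> L i" unfolding N_def by (rule minus_Nf_in_L[OF f im])
  have Nred: "reduced i a" if "a \<in> keys N" for a
    using keys_Nf[OF f im that[unfolded N_def]] by auto
  have "N * Var (n+i) = Var (n+i) * f - Var (n+i) * (f - N)" by (simp add: algebra_simps)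
  moreover have "Var (n+i) * (f - N) \<in> L i" using fN i by (intro ideal_gen_mult Var_y_polyring) auto
  ultimately have "N * Var (n+i) \<in> L i" using yf by (simp add: ideal_gen_diff)
  then have T: "ycoef \<beta> (Nf i (N * Var (n+i))) \<in> Q i" for \<beta> by (rule ycoef_Nf_in_Q)
  have "ycoef \<gamma> N \<in> Q i" for \<gamma>
  proof -
    consider "lookup \<gamma> (n+i) = 0" | "lookup \<gamma> (n+i) = 1" | "2 \<le> lookup \<gamma> (n+i)" by linarith
    then show ?thesis
    proof cases
      case 1
      then have "lookup (\<gamma> + ?e) (n+i) = 1" by (simp add: lookup_add)
      from ycoef_Nf_mult_y_raise[OF i Nred this] show ?thesis using T[of "\<gamma> + ?e"] by simp
    next
      case 2
      then have "lookup (\<gamma> - ?e) (n+i) = 0" and \<gamma>: "\<gamma> - ?e + ?e = \<gamma>"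
        using monom_split(1)[of 1 \<gamma> "n+i"] by (simp_all add: minus_poly_mapping.rep_eq)
      from ycoef_Nf_mult_y_lower[OF i Nred this(1)] \<gamma>
      have "- q i * ycoef \<gamma> N \<in> Q i" using T[of "\<gamma> - ?e"] by simp
      then have "q i * ycoef \<gamma> N \<in> Q i" using ideal_gen_uminus by fastforce
      then show ?thesis using reg ycoef_polyring by blast
    next
      case 3
      then show ?thesis using ycoef_high_y_exponent[OF i Nred] by simp
    qed
  qed
  then have "N \<in> L i" using in_L_if_ycoefs_in_Q[OF Nf_polyring[OF f im, folded N_def] im] by blast
  from ideal_gen_add[OF fN this] show ?thesis by simp
qed

text \<open>L m is a proper ideal: all its generators have monomials of positive degree only.\<close>

lemma one_notin_L: "1 \<notin> ideal_gen (n+m) (J \<union> (\<lambda>i. Var (n+i)) ` {..<m})"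
proof
  have Jd: "\<forall>a\<in>keys p. 2 \<le> mdeg a" if "p \<in> J" for p
    using ideal_gen_min_degree[OF _ that] gen_quadric by (auto simp: quadric_def homogeneous_def)
  have G: "\<forall>g\<in>J \<union> (\<lambda>i. Var (n+i)) ` {..<m}. \<forall>b\<in>keys g. 1 \<le> mdeg b"
  proof
    fix g assume "g \<in> J \<union> (\<lambda>i. Var (n+i)) ` {..<m}"
    then show "\<forall>b\<in>keys g. 1 \<le> mdeg b"
    proof
      assume "g \<in> J" then show ?thesis using Jd by fastforce
    qed (auto simp: Var_def)
  qed
  assume "1 \<in> ideal_gen (n+m) (J \<union> (\<lambda>i. Var (n+i)) ` {..<m})"
  from ideal_gen_min_degree[OF G this] show False by simp
qed

lemma q_regular_mod_Q:
  assumes reg: "regular_seq n {0} (map q [0..<m])" and i: "i < m"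
  shows "\<forall>f\<in>polyring n. q i * f \<in> Q i \<longrightarrow> f \<in> Q i"
proof -
  have "\<forall>f\<in>polyring n. map q [0..<m] ! i * f \<in> ideal_gen n ({0} \<union> set (take i (map q [0..<m])))
     \<longrightarrow> f \<in> ideal_gen n ({0} \<union> set (take i (map q [0..<m])))"
    using reg i unfolding regular_seq_def by simp
  moreover have "set (take i (map q [0..<m])) = q ` {..<i}" using i by (simp add: set_take_map)
  ultimately show ?thesis using i by simp
qed

lemma y_regular_seq:
  assumes reg: "regular_seq n {0} (map q [0..<m])"
  shows "regular_seq (n+m) J (map (\<lambda>i. Var (n+i)) [0..<m])"
  unfolding regular_seq_def
proof (intro conjI allI impI ballI)
  show "set (map (\<lambda>i. Var (n + i)) [0..<m]) \<subseteq> polyring (n + m)" using Var_y_polyring by auto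
  show "1 \<notin> ideal_gen (n + m) (J \<union> set (map (\<lambda>i. Var (n + i)) [0..<m]))"
    using one_notin_L by (simp add: atLeast0LessThan)
next
  fix i f
  assume i: "i < length (map (\<lambda>i. Var (n + i)) [0..<m])" and f: "f \<in> polyring (n+m)"
    and h: "map (\<lambda>i. Var (n + i)) [0..<m] ! i * f
       \<in> ideal_gen (n + m) (J \<union> set (take i (map (\<lambda>i. Var (n + i)) [0..<m])))"
  have im: "i < m" using i by simp
  have st: "set (take i (map (\<lambda>i. Var (n + i)) [0..<m])) = (\<lambda>i. Var (n + i)) ` {..<i}"
    using im by (simp add: set_take_map)
  have e: "map (\<lambda>i. Var (n + i)) [0..<m] ! i = Var (n+i)" using im by simp
  have "Var (n+i) * f \<in> L i" using h unfolding e st .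
  from y_regular_step[OF q_regular_mod_Q[OF reg im] im f this]
  show "f \<in> ideal_gen (n + m) (J \<union> set (take i (map (\<lambda>i. Var (n + i)) [0..<m])))"
    unfolding st .
qed

subsection \<open>S_n / I is isomorphic to S_{n+m} / L m\<close>

text \<open>Setting all y_j to 0 is the normal form Nf m on polynomials of S_{n+m}, so by (2) it maps
  L m into Q m = I; together with the inclusion of S_n this gives the isomorphism.\<close>

definition proj_x :: "nat \<Rightarrow> 'k mpoly" where "proj_x i = (if i < n then Var i else 0)"

lemma subst_proj_x:
  assumes "P \<in> polyring (n+m)"
  shows "subst proj_x P = Nf m P"
  unfolding subst_as_lin_ext Nf_def
proof (rule lin_ext_cong)
  fix a assume a: "a \<in> keys P"
  have ka: "keys a \<subseteq> {..<n+m}" using assms a by (simp add: polyring_iff)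
  show "(\<Prod>i\<in>keys a. proj_x i ^ lookup a i) = red m a"
  proof (cases "\<exists>k<m. lookup a (n+k) \<noteq> 0")
    case True
    then obtain k where k: "k<m" "lookup a (n+k) \<noteq> 0" by blast
    have "n+k \<in> keys a" using k by (simp add: in_keys_iff)
    moreover have "proj_x (n+k) ^ lookup a (n+k) = 0" using k by (simp add: proj_x_def)
    ultimately have "(\<Prod>i\<in>keys a. proj_x i ^ lookup a i) = 0" by (intro prod_zero) auto
    moreover have "red m a = 0" unfolding red_def if_P[OF True] ..
    ultimately show ?thesis by simp
  next
    case False
    then have ra: "reduced m a" by (auto simp: reduced_def)
    have kx: "i < n" if i: "i \<in> keys a" for i
    proof (rule ccontr)
      assume "\<not> i < n"
      then have "i = n + (i - n)" "i - n < m" using ka i by auto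
      then have "lookup a i = 0" using False by (metis)
      then show False using i by (simp add: in_keys_iff)
    qed
    have "(\<Prod>i\<in>keys a. proj_x i ^ lookup a i) = (\<Prod>i\<in>keys a. Var i ^ lookup a i)"
      by (rule prod.cong) (use kx in \<open>auto simp: proj_x_def\<close>)
    also have "\<dots> = single a 1" by (rule Var_prod)
    finally show ?thesis using red_reduced[OF ra] by simp
  qed
qed

lemma ycoef0_Nf_full:
  assumes "P \<in> polyring (n+m)"
  shows "ycoef 0 (Nf m P) = Nf m P"
proof -
  have "ycoef 0 (Nf m P) = lin_ext (\<lambda>a. single a 1) (Nf m P)"
    unfolding ycoef_def
  proof (rule lin_ext_cong)
    fix a assume a: "a \<in> keys (Nf m P)"
    have ra: "reduced m a" and ka: "keys a \<subseteq> {..<n+m}" using keys_Nf[OF assms le_refl a] by auto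
    have z: "lookup a k = 0" if "n \<le> k" for k
    proof (cases "k < n+m")
      case True
      then have "k = n + (k - n)" "k - n < m" using that by auto
      then show ?thesis using ra unfolding reduced_def by metis
    next
      case False
      then have "k \<notin> keys a" using ka by auto
      then show ?thesis by (simp add: in_keys_iff)
    qed
    have "ypart a = 0" by (rule poly_mapping_eqI) (simp add: lookup_ypart z)
    moreover have "xpart a = a" by (rule poly_mapping_eqI) (simp add: lookup_xpart z)
    ultimately show "ycoef_monom 0 a = single a 1" by (simp add: ycoef_monom_def)
  qed
  then show ?thesis by (simp add: lin_ext_id)
qed

lemma Q_sub_I: "Q m \<subseteq> I"
  by (rule ideal_gen_least[OF ideal_gen_closed]) (auto intro: ideal_gen_gen)

lemma I_sub_L: "I \<subseteq> L m"
  using ideal_gen_mono[of "q ` {..<m}" "{0} \<union> q ` {..<m}" n] Q_sub_L[of m] by auto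

lemma subst_proj_x_L:
  assumes "P \<in> L m"
  shows "subst proj_x P \<in> I"
proof -
  have Pp: "P \<in> polyring (n+m)" using L_poly[of m] assms by auto
  have "ycoef 0 (Nf m P) \<in> Q m" by (rule ycoef_Nf_in_Q[OF assms])
  then show ?thesis using subst_proj_x[OF Pp] ycoef0_Nf_full[OF Pp] Q_sub_I by auto
qed

lemma presentation_iso: "graded_iso n I (n+m) (L m)"
proof -
  have incl_linear: "\<forall>i<n. linear_form (n+m) (Var i :: 'k mpoly)" by (auto intro: linear_Var)
  have proj_linear: "\<forall>i<n+m. linear_form n (proj_x i)"
  proof (intro allI impI)
    fix i assume "i < n+m" then show "linear_form n (proj_x i)"
      by (cases "i < n") (simp_all add: proj_x_def linear_Var linear_zero)
  qed
  have incl_maps: "subst Var ` I \<subseteq> L m" using I_sub_L by (simp add: subst_Var)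
  have proj_maps: "subst proj_x ` L m \<subseteq> I" using subst_proj_x_L by auto
  have proj_incl: "\<forall>i<n. subst proj_x (Var i) - Var i \<in> I" by (simp add: subst_Var_i proj_x_def)
  have incl_proj: "\<forall>i<n+m. subst Var (proj_x i) - Var i \<in> L m"
  proof (intro allI impI)
    fix i assume i: "i < n+m"
    show "subst Var (proj_x i) - Var i \<in> L m"
    proof (cases "i < n")
      case True then show ?thesis by (simp add: proj_x_def subst_Var)
    next
      case False
      then have "i = n + (i - n)" "i - n < m" using i by auto
      then have "Var i \<in> L m" using y_in_L[of "i - n" m] by simp
      then show ?thesis using False by (simp add: proj_x_def subst_Var ideal_gen_uminus)
    qed
  qed
  show ?thesis unfolding graded_iso_def using incl_linear proj_linear incl_maps proj_maps proj_incl incl_proj by blast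
qed

end

theorem mainTheorem2:
  fixes q :: "nat \<Rightarrow> 'k::field mpoly" and n m :: nat
  assumes quad: "\<forall>i<m. quadric n (q i)"
    and reg: "regular_seq n {0} (map q [0..<m])"
  shows "LG_quadratic n (ideal_gen n (q ` {..<m}))
    \<and> G_quadratic (n + m) (ideal_gen (n + m) ((\<lambda>i. Var (n + i) ^ 2 + q i) ` {..<m}))
    \<and> regular_seq (n + m) (ideal_gen (n + m) ((\<lambda>i. Var (n + i) ^ 2 + q i) ` {..<m}))
        (map (\<lambda>i. Var (n + i)) [0..<m])
    \<and> graded_iso n (ideal_gen n (q ` {..<m})) (n + m)
        (ideal_gen (n + m) (ideal_gen (n + m) ((\<lambda>i. Var (n + i) ^ 2 + q i) ` {..<m})
                             \<union> (\<lambda>i. Var (n + i)) ` {..<m}))"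
proof -
  interpret quadric_seq n m q using quad by unfold_locales
  have ys: "set (map (\<lambda>i. Var (n + i)) [0..<m]) = (\<lambda>i. Var (n + i)) ` {..<m}"
    by (simp add: atLeast0LessThan)
  have "\<forall>y\<in>set (map (\<lambda>i. Var (n + i)) [0..<m]). linear_form (n + m) y"
    by (auto intro: linear_Var)
  then have "LG_quadratic n I"
    unfolding LG_quadratic_def
    using std_graded_I J_G_quadratic y_regular_seq[OF reg] presentation_iso[folded ys] by blast
  then show ?thesis using J_G_quadratic y_regular_seq[OF reg] presentation_iso by simp
qed

end
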